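(* In the setting of the context with $2\le q<p+\nu$ and $\theta_2\in(0,1)$, suppose that for every $i\ge1$ the point $x_i$ is a minimizer of $x\mapsto\tilde f(x;\hat x_{i-1})+\frac{L^{\alpha}}{c_q\lambda_i^{1-\alpha}\theta_2^{\alpha}\varsigma}\|x-\hat x_{i-1}\|^{\varsigma}$ and that $\omega_i:=L\lambda_i\|x_i-\hat x_{i-1}\|^{p+\nu-q}\le\theta_2$. Then for every $k\ge1$, $$\sum_{i=1}^k\omega_i^{\frac{\varsigma}{p+\nu-q}}\Bigl(\frac{A_i^{p+\nu-1}}{(A_i-A_{i-1})^{p+\nu}}\Bigr)^{\frac{q}{p+\nu-q}}\le q\,\theta_2^{\alpha}\bigl(1-\theta_2^{\frac{q}{q-1}}\bigr)^{-1}\gamma^{-\frac{p+\nu}{p+\nu-q}}\Bigl(\frac{L}{c_q}\Bigr)^{\frac{q}{p+\nu-q}}h(x^*;x_0).$$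
   Context: Norm conventions: $\|\cdot\|$ a norm on $\mathbb{R}^d$, $\|u\|_*:=\max\{\langle u,x\rangle:\|x\|\le1\}$; for a symmetric $p$-linear form $T$, $\|T\|_*:=\max\{T[y_1,\dots,y_p]:\|y_j\|\le1\}$, $T[h]^i:=T[h,\dots,h]$; $(p,\nu,L)$-Hölder continuous derivatives means $\frac1{(p-1)!}\|\nabla^pg(x)-\nabla^pg(y)\|_*\le L\|x-y\|^\nu$ for all $x,y$; $\varphi$ is $(s,\sigma)$-uniformly convex if $\varphi(y)\ge\varphi(x)+\langle\zeta,y-x\rangle+\frac\sigma s\|y-x\|^s$ for all $y$, all $x$ with $\partial\varphi(x)\ne\emptyset$, all $\zeta\in\partial\varphi(x)$. Setting: $f=g+l$, $g:\mathbb{R}^d\to\mathbb{R}$ convex with $(p,\nu,L)$-Hölder continuous derivatives ($p\in\{1,2,\dots\}$, $\nu\in[0,1]$, $L>0$), $l$ proper closed convex, $x^*$ a minimizer of $f$. $\Phi_y(x):=g(y)+\sum_{i=1}^p\frac1{i!}\nabla^ig(y)[x-y]^i$, $\hat f(x;y):=g(y)+\langle\nabla g(y),x-y\rangle+l(x)$, $\tilde f(x;y):=\Phi_y(x)+l(x)$. $\gamma,\beta>0$ with $\frac1q\|\cdot\|^q$ $(q,\beta)$-uniformly convex; $c_q:=(\beta(q-1)^{1-q})^{1/q}$; $x_0\in\mathrm{dom}\,l$; $h(\cdot;x_0):\mathbb{R}^d\to\mathbb{R}$ convex, $h\ge0$, $h(x;x_0)=0$ iff $x=x_0$, $(q,\gamma)$-uniformly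 convex. $\alpha\in[0,1]$, $\varsigma:=\alpha(p+\nu)+(1-\alpha)q$. $a_i>0$, $A_0:=0$, $A_i:=A_{i-1}+a_i$, $\lambda_i:=\frac{a_i^q}{c_q\gamma A_i^{q-1}}$. Iterates: $z_0:=x_0$; for $i\ge1$, $\hat x_{i-1}:=\frac{a_i}{A_i}z_{i-1}+\frac{A_{i-1}}{A_i}x_{i-1}$, $x_i$ as in the claim, $z_i:=\operatorname{argmin}_x\{\sum_{j=1}^ia_j\hat f(x;x_j)+h(x;x_0)\}$. *)

theory Defs
  imports "HOL-Analysis.Analysis"
begin

definition is_norm :: "('a::real_vector \<Rightarrow> real) \<Rightarrow> bool" where
  "is_norm N \<longleftrightarrow> (\<forall>x. 0 \<le> N x) \<and> (\<forall>x. N x = 0 \<longleftrightarrow> x = 0)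
     \<and> (\<forall>c x. N (c *\<^sub>R x) = \<bar>c\<bar> * N x) \<and> (\<forall>x y. N (x + y) \<le> N x + N y)"

definition form_norm :: "('a \<Rightarrow> real) \<Rightarrow> nat \<Rightarrow> ('a list \<Rightarrow> real) \<Rightarrow> real" where
  "form_norm N p T = Sup {T ys | ys. length ys = p \<and> (\<forall>y\<in>set ys. N y \<le> 1)}"

definition multilinear_form :: "nat \<Rightarrow> ('a::real_vector list \<Rightarrow> real) \<Rightarrow> bool" where
  "multilinear_form p T \<longleftrightarrow>
     (\<forall>us vs. length us + length vs + 1 = p \<longrightarrow> linear (\<lambda>y. T (us @ y # vs)))"

text \<open>Dg i x is the i-th derivative of g at x, as an i-linear form:
  Dg 0 x [] = g x, and Dg (i+1) x (h # hs) is the derivative of Dg i \<cdot> hs at x in direction h.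
  g has (p,\<nu>,L)-Hoelder continuous derivatives.\<close>
definition holder_derivs ::
  "('a::euclidean_space \<Rightarrow> real) \<Rightarrow> nat \<Rightarrow> real \<Rightarrow> real
     \<Rightarrow> (nat \<Rightarrow> 'a \<Rightarrow> 'a list \<Rightarrow> real) \<Rightarrow> ('a \<Rightarrow> real) \<Rightarrow> bool" where
  "holder_derivs N p \<nu> L Dg g \<longleftrightarrow>
     (\<forall>x. Dg 0 x [] = g x)
   \<and> (\<forall>i\<le>p. \<forall>x. multilinear_form i (Dg i x))
   \<and> (\<forall>i<p. \<forall>x hs. length hs = i \<longrightarrow>
         ((\<lambda>y. Dg i y hs) has_derivative (\<lambda>h. Dg (Suc i) x (h # hs))) (at x))
   \<and> (\<forall>x y. form_norm N p (\<lambda>ys. Dg p x ys - Dg p y ys) / fact (p - 1)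
              \<le> L * N (x - y) powr \<nu>)"

definition unif_convex :: "('a::euclidean_space \<Rightarrow> real) \<Rightarrow> real \<Rightarrow> real \<Rightarrow> ('a \<Rightarrow> real) \<Rightarrow> bool" where
  "unif_convex N s \<sigma> \<phi> \<longleftrightarrow>
     (\<forall>x \<zeta>. (\<forall>y. \<phi> y \<ge> \<phi> x + \<zeta> \<bullet> (y - x)) \<longrightarrow>
        (\<forall>y. \<phi> y \<ge> \<phi> x + \<zeta> \<bullet> (y - x) + \<sigma> / s * N (y - x) powr s))"

definition proper_closed_convex :: "('a::euclidean_space \<Rightarrow> ereal) \<Rightarrow> bool" where
  "proper_closed_convex l \<longleftrightarrow> (\<forall>x. l x \<noteq> -\<infinity>) \<and> (\<exists>x. l x \<noteq> \<infinity>)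
     \<and> convex {(x, t::real). l x \<le> ereal t} \<and> closed {(x, t::real). l x \<le> ereal t}"

definition taylor_model :: "(nat \<Rightarrow> 'a::real_vector \<Rightarrow> 'a list \<Rightarrow> real) \<Rightarrow> nat \<Rightarrow> 'a \<Rightarrow> 'a \<Rightarrow> real" where
  "taylor_model Dg p y x = Dg 0 y [] + (\<Sum>i=1..p. Dg i y (replicate i (x - y)) / fact i)"

definition cq :: "real \<Rightarrow> real \<Rightarrow> real" where
  "cq \<beta> q = (\<beta> * (q - 1) powr (1 - q)) powr (1 / q)"

definition accA :: "(nat \<Rightarrow> real) \<Rightarrow> nat \<Rightarrow> real" where
  "accA a i = (\<Sum>j=1..i. a j)"

definition lam :: "real \<Rightarrow> real \<Rightarrow> real \<Rightarrow> (nat \<Rightarrow> real) \<Rightarrow> nat \<Rightarrow> real" where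
  "lam q \<gamma> \<beta> a i = a i powr q / (cq \<beta> q * \<gamma> * accA a i powr (q - 1))"

definition xhat :: "(nat \<Rightarrow> real) \<Rightarrow> (nat \<Rightarrow> 'a::real_vector) \<Rightarrow> (nat \<Rightarrow> 'a) \<Rightarrow> nat \<Rightarrow> 'a" where
  "xhat a x z i = (a (Suc i) / accA a (Suc i)) *\<^sub>R z i + (accA a i / accA a (Suc i)) *\<^sub>R x i"

definition varsigma :: "real \<Rightarrow> nat \<Rightarrow> real \<Rightarrow> real \<Rightarrow> real" where
  "varsigma \<alpha> p \<nu> q = \<alpha> * (real p + \<nu>) + (1 - \<alpha>) * q"

end

theory Submission
  imports Defs
begin

(* Each step x_i minimises the regularised Taylor model, and its
  first-order optimality condition, the Hoelder bound on the Taylor error of the gradient,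
  uniform convexity of N^q/q and Young's inequality (with omega_i \<le> theta_2 controlling the
  error) give the one-step inequality: for every u in dom l,
    gain_i \<le> Dg(x_i)[u - x_i] + l u - l x_i + N(u - xhat_(i-1))^q / (q c_q lambda_i),
  where gain_i is a fixed multiple of L^alpha N(x_i - xhat_(i-1))^varsigma / (c_q lambda_i^(1-alpha)).
  Choosing u = (A_(i-1) x_(i-1) + a_i z_i) / A_i, one has u - xhat_(i-1) = (a_i/A_i)(z_i - z_(i-1)),
  and the last term is paid exactly by the growth of the uniformly convex estimate function
  y \<mapsto> sum_j a_j (g x_j + Dg(x_j)[y - x_j] + l y) + h y around its minimiser z_(i-1).  By induction,
  A_k (g + l)(x_k) + sum_i A_i gain_i \<le> min of the estimate function \<le> A_k (g + l)(x^* ) + h x^*,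
  so sum_i A_i gain_i \<le> h x^*, and each summand of the claim is a constant multiple of A_i gain_i. *)

section \<open>Norms\<close>

context
  fixes N :: "'a::real_vector \<Rightarrow> real"
  assumes N: "is_norm N"
begin

lemma is_norm_nonneg: "0 \<le> N x"
  using N unfolding is_norm_def by blast

lemma is_norm_eq_0_iff: "N x = 0 \<longleftrightarrow> x = 0"
  using N unfolding is_norm_def by blast

lemma is_norm_scaleR: "N (c *\<^sub>R x) = \<bar>c\<bar> * N x"
  using N unfolding is_norm_def by blast

lemma is_norm_triangle: "N (x + y) \<le> N x + N y"
  using N unfolding is_norm_def by blast

lemma is_norm_zero: "N 0 = 0"
  using is_norm_eq_0_iff by simp

lemma is_norm_minus: "N (- x) = N x"
  using is_norm_scaleR[of "-1" x] by simp

lemma is_norm_minus_commute: "N (x - y) = N (y - x)"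
  using is_norm_minus[of "x - y"] by simp

lemma is_norm_reverse_triangle: "\<bar>N x - N y\<bar> \<le> N (x - y)"
proof -
  have "N x \<le> N (x - y) + N y"
    using is_norm_triangle[of "x - y" y] by simp
  moreover have "N y \<le> N (x - y) + N x"
    using is_norm_triangle[of "y - x" x] is_norm_minus_commute[of x y] by simp
  ultimately show ?thesis by linarith
qed

lemma is_norm_sum: "finite A \<Longrightarrow> N (\<Sum>i\<in>A. f i) \<le> (\<Sum>i\<in>A. N (f i))"
  by (induction A rule: finite_induct) (auto simp: is_norm_zero intro: order_trans[OF is_norm_triangle])

lemma convex_on_is_norm: "convex_on UNIV N"
proof (rule convex_onI)
  fix t :: real and x y :: 'a
  assume "0 < t" "t < 1"
  then show "N ((1 - t) *\<^sub>R x + t *\<^sub>R y) \<le> (1 - t) * N x + t * N y"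
    using is_norm_triangle[of "(1 - t) *\<^sub>R x" "t *\<^sub>R y"] by (simp add: is_norm_scaleR)
qed auto

end

lemma convex_combination_powr_le:
  fixes a b u q :: real
  assumes a: "0 \<le> a" and b: "0 \<le> b" and u: "0 \<le> u" "u \<le> 1" and q: "1 \<le> q"
  shows "((1 - u) * a + u * b) powr q \<le> (1 - u) * a powr q + u * b powr q"
proof -
  have scaled: "(s * c) powr q \<le> s * c powr q" if "0 \<le> s" "s \<le> 1" "0 \<le> c" for s c :: real
  proof -
    have "s powr q \<le> s powr 1"
      using that q by (intro powr_mono') auto
    then show ?thesis
      using that by (simp add: powr_mult mult_right_mono)
  qed
  consider "a = 0" | "b = 0" | "0 < a" "0 < b"
    using a b by linarith
  then show ?thesis
  proof cases
    case 1
    then show ?thesis using scaled[of u b] u b by simp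
  next
    case 2
    then show ?thesis using scaled[of "1 - u" a] u a by simp
  next
    case 3
    then show ?thesis
      using convex_onD[OF powr_convex[OF q], of u a b] u by (simp add: algebra_simps)
  qed
qed

lemma convex_on_is_norm_powr:
  assumes N: "is_norm N" and q: "1 \<le> q"
  shows "convex_on UNIV (\<lambda>y. N y powr q / q)"
proof (rule convex_onI)
  fix t :: real and x y
  assume t: "0 < t" "t < 1"
  have "N ((1 - t) *\<^sub>R x + t *\<^sub>R y) powr q \<le> ((1 - t) * N x + t * N y) powr q"
    using convex_onD[OF convex_on_is_norm[OF N], of t x y] t q
    by (intro powr_mono2) (auto simp: is_norm_nonneg[OF N])
  also have "\<dots> \<le> (1 - t) * N x powr q + t * N y powr q"
    using t q by (intro convex_combination_powr_le) (auto simp: is_norm_nonneg[OF N])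
  finally show "N ((1 - t) *\<^sub>R x + t *\<^sub>R y) powr q / q \<le> (1 - t) * (N x powr q / q) + t * (N y powr q / q)"
    using q by (simp add: divide_right_mono add_divide_distrib[symmetric])
qed auto

context
  fixes N :: "'a::euclidean_space \<Rightarrow> real"
  assumes N: "is_norm N"
begin

lemma is_norm_le_norm: "\<exists>C>0. \<forall>x. N x \<le> C * norm x"
proof (intro exI conjI allI)
  let ?C = "1 + (\<Sum>b\<in>Basis. N b)"
  show "0 < ?C"
    by (simp add: add_pos_nonneg sum_nonneg is_norm_nonneg[OF N])
  fix x :: 'a
  have "N x = N (\<Sum>b\<in>Basis. (x \<bullet> b) *\<^sub>R b)"
    by (simp add: euclidean_representation)
  also have "\<dots> \<le> (\<Sum>b\<in>Basis. N ((x \<bullet> b) *\<^sub>R b))"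
    by (rule is_norm_sum[OF N]) simp
  also have "\<dots> = (\<Sum>b\<in>Basis. \<bar>x \<bullet> b\<bar> * N b)"
    by (simp add: is_norm_scaleR[OF N])
  also have "\<dots> \<le> (\<Sum>b\<in>Basis. norm x * N b)"
    by (intro sum_mono mult_right_mono) (auto simp: Basis_le_norm is_norm_nonneg[OF N])
  also have "\<dots> = norm x * (\<Sum>b\<in>Basis. N b)"
    by (simp add: sum_distrib_left)
  also have "\<dots> \<le> ?C * norm x"
    by (simp add: algebra_simps)
  finally show "N x \<le> ?C * norm x" .
qed

lemma continuous_on_is_norm: "continuous_on UNIV N"
proof -
  obtain C where C: "C > 0" "\<And>x. N x \<le> C * norm x"
    using is_norm_le_norm by blast
  have "C-lipschitz_on UNIV N"
  proof (rule lipschitz_onI)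
    fix x y :: 'a
    show "dist (N x) (N y) \<le> C * dist x y"
      using is_norm_reverse_triangle[OF N, of x y] C(2)[of "x - y"] by (simp add: dist_real_def dist_norm)
  qed (use C in simp)
  then show ?thesis
    by (rule lipschitz_on_continuous_on)
qed

lemma is_norm_ge_norm: "\<exists>c>0. \<forall>x. c * norm x \<le> N x"
proof -
  have "(SOME i. i \<in> Basis) \<in> sphere (0::'a) 1"
    by (simp add: SOME_Basis)
  then have "sphere (0::'a) 1 \<noteq> {}"
    by blast
  then obtain y where y: "y \<in> sphere 0 1" "\<And>z. z \<in> sphere 0 1 \<Longrightarrow> N y \<le> N z"
    using continuous_attains_inf[OF compact_sphere _ continuous_on_subset[OF continuous_on_is_norm]]
    by blast
  then have "N y > 0"
    using is_norm_eq_0_iff[OF N, of y] is_norm_nonneg[OF N, of y] by auto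
  moreover have "N y * norm x \<le> N x" for x
  proof (cases "x = 0")
    case False
    then have "N y \<le> N ((1 / norm x) *\<^sub>R x)"
      by (intro y(2)) simp
    then show ?thesis
      using False by (simp add: is_norm_scaleR[OF N] field_simps)
  qed (simp add: is_norm_zero[OF N])
  ultimately show ?thesis
    by blast
qed

end

section \<open>Convexity\<close>

lemma convex_on_subgradient_exists:
  fixes f :: "'a::euclidean_space \<Rightarrow> real"
  assumes cf: "convex_on UNIV f"
  shows "\<exists>\<zeta>. \<forall>y. f x + \<zeta> \<bullet> (y - x) \<le> f y"
proof -
  \<comment> \<open>separate the origin from the shifted strict epigraph\<close>
  define S where "S = {(y - x, s - f x) | y s. f y < s}"
  have "convex S"
    unfolding convex_alt S_def
  proof safe
    fix y1 s1 y2 s2 and u :: real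
    assume h1: "f y1 < s1" and h2: "f y2 < s2" and u: "0 \<le> u" "u \<le> 1"
    have "f ((1 - u) *\<^sub>R y1 + u *\<^sub>R y2) \<le> (1 - u) * f y1 + u * f y2"
      using convex_onD[OF cf] u by simp
    also have "\<dots> < (1 - u) * s1 + u * s2"
    proof (cases "u = 0")
      case False
      then show ?thesis
        using u h1 h2 by (intro add_le_less_mono mult_left_mono mult_strict_left_mono) auto
    qed (use h1 in simp)
    finally show "\<exists>y s. (1 - u) *\<^sub>R (y1 - x, s1 - f x) + u *\<^sub>R (y2 - x, s2 - f x) = (y - x, s - f x) \<and> f y < s"
      by (intro exI[of _ "(1 - u) *\<^sub>R y1 + u *\<^sub>R y2"] exI[of _ "(1 - u) * s1 + u * s2"])
         (auto simp: algebra_simps)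
  qed
  moreover have "0 \<notin> S"
    unfolding S_def by (auto simp: zero_prod_def)
  ultimately obtain c where c: "c \<noteq> 0" "\<forall>z\<in>S. 0 \<le> inner c z"
    using separating_hyperplane_set_0 by blast
  obtain a b where ab: "c = (a, b)"
    by (cases c)
  have key: "0 \<le> a \<bullet> (y - x) + b * (s - f x)" if "f y < s" for y s
    using c(2) that ab unfolding S_def by (auto simp: inner_Pair)
  have "b \<noteq> 0"
  proof
    assume "b = 0"
    then have "a \<bullet> a \<le> 0"
      using key[of "x - a" "f (x - a) + 1"] by simp
    then have "a = 0"
      by (metis inner_eq_zero_iff inner_ge_zero order_antisym)
    then show False
      using c ab \<open>b = 0\<close> by (simp add: zero_prod_def)
  qed
  then have b: "b > 0"
    using key[of x "f x + 1"] by simp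
  have "f x + (- (1 / b) *\<^sub>R a) \<bullet> (y - x) \<le> f y" for y
  proof (rule field_le_epsilon)
    fix e :: real
    assume "e > 0"
    then have "0 \<le> a \<bullet> (y - x) + b * (f y + e - f x)"
      by (intro key) simp
    then show "f x + (- (1 / b) *\<^sub>R a) \<bullet> (y - x) \<le> f y + e"
      using b by (simp add: field_simps)
  qed
  then show ?thesis
    by blast
qed

lemma unif_convex_secant_ineq:
  fixes \<phi> :: "'a::euclidean_space \<Rightarrow> real"
  assumes N: "is_norm N" and conv: "convex_on UNIV \<phi>" and uc: "unif_convex N q \<sigma> \<phi>"
    and t: "0 < t" "t \<le> 1"
  shows "\<phi> (w + t *\<^sub>R v) + (1 - t) / t * (\<phi> (w + t *\<^sub>R v) - \<phi> w) + \<sigma> / q * ((1 - t) powr q * N v powr q)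
    \<le> \<phi> (w + v)"
proof -
  obtain \<zeta> where \<zeta>: "\<And>y. \<phi> (w + t *\<^sub>R v) + \<zeta> \<bullet> (y - (w + t *\<^sub>R v)) \<le> \<phi> y"
    using convex_on_subgradient_exists[OF conv] by blast
  then have uc': "\<phi> (w + t *\<^sub>R v) + \<zeta> \<bullet> (y - (w + t *\<^sub>R v)) + \<sigma> / q * N (y - (w + t *\<^sub>R v)) powr q \<le> \<phi> y" for y
    using uc unfolding unif_convex_def by blast
  have shift: "w + v - (w + t *\<^sub>R v) = (1 - t) *\<^sub>R v"
    by (simp add: algebra_simps)
  have "N ((1 - t) *\<^sub>R v) powr q = (1 - t) powr q * N v powr q"
    using t by (simp add: is_norm_scaleR[OF N] powr_mult is_norm_nonneg[OF N])
  then have "\<phi> (w + t *\<^sub>R v) + (1 - t) * (\<zeta> \<bullet> v) + \<sigma> / q * ((1 - t) powr q * N v powr q) \<le> \<phi> (w + v)"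
    using uc'[of "w + v"] unfolding shift by simp
  moreover have "(1 - t) / t * (\<phi> (w + t *\<^sub>R v) - \<phi> w) \<le> (1 - t) * (\<zeta> \<bullet> v)"
  proof -
    have "(\<phi> (w + t *\<^sub>R v) - \<phi> w) / t \<le> \<zeta> \<bullet> v"
      using \<zeta>[of w] t by (simp add: field_simps)
    then show ?thesis
      using t mult_left_mono[of "(\<phi> (w + t *\<^sub>R v) - \<phi> w) / t" "\<zeta> \<bullet> v" "1 - t"] by simp
  qed
  ultimately show ?thesis
    by linarith
qed

lemma tendsto_at_right_0_le:
  fixes F :: "real \<Rightarrow> real"
  assumes "(F \<longlongrightarrow> Y) (at_right 0)" "\<And>t. 0 < t \<Longrightarrow> t < 1 \<Longrightarrow> F t \<le> X"
  shows "Y \<le> X"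
proof (rule tendsto_upperbound[OF assms(1)])
  show "\<forall>\<^sub>F t in at_right 0. F t \<le> X"
    using eventually_at_right_real[of 0 1] assms(2) by (auto elim: eventually_mono)
qed simp

lemma tendsto_one_minus_powr_at_right: "((\<lambda>t::real. (1 - t) powr q) \<longlongrightarrow> 1) (at_right 0)"
proof -
  have "((\<lambda>t::real. 1 - t) \<longlongrightarrow> 1 - 0) (at_right 0)"
    by (intro tendsto_intros)
  from tendsto_powr[OF this tendsto_const[of q]] show ?thesis
    by simp
qed

lemma unif_convex_minimizer_growth:
  fixes N :: "'a::euclidean_space \<Rightarrow> real" and h \<Psi> :: "'a \<Rightarrow> real"
  assumes N: "is_norm N" and h: "convex_on UNIV h" "unif_convex N q \<gamma> h"
    and \<Psi>: "convex_on D \<Psi>" and z: "z \<in> D" and min: "\<And>y. y \<in> D \<Longrightarrow> \<Psi> z + h z \<le> \<Psi> y + h y"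
    and y: "y \<in> D"
  shows "\<Psi> z + h z + \<gamma> / q * N (y - z) powr q \<le> \<Psi> y + h y"
proof -
  have "\<Psi> z + h z + \<gamma> / q * ((1 - t) powr q * N (y - z) powr q) \<le> \<Psi> y + h y"
    if t: "0 < t" "t < 1" for t
  proof -
    define yt where "yt = z + t *\<^sub>R (y - z)"
    have yt: "yt = (1 - t) *\<^sub>R z + t *\<^sub>R y"
      unfolding yt_def by (simp add: algebra_simps)
    have "yt \<in> D"
      unfolding yt using convexD_alt[OF convex_on_imp_convex[OF \<Psi>] z y] t by simp
    have "\<Psi> yt \<le> \<Psi> z - t * \<Psi> z + t * \<Psi> y"
      using convex_onD[OF \<Psi>, of t z y] t z y unfolding yt by (simp add: left_diff_distrib)
    then have descent: "t * \<Psi> z - t * \<Psi> y \<le> h yt - h z"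
      using min[OF \<open>yt \<in> D\<close>] by linarith
    have "(1 - t) / t * (t * \<Psi> z - t * \<Psi> y) \<le> (1 - t) / t * (h yt - h z)"
      using descent t by (intro mult_left_mono) auto
    moreover have "(1 - t) / t * (t * \<Psi> z - t * \<Psi> y) = \<Psi> z - \<Psi> y - t * \<Psi> z + t * \<Psi> y"
      using t by (simp add: field_simps)
    moreover have "h yt + (1 - t) / t * (h yt - h z) + \<gamma> / q * ((1 - t) powr q * N (y - z) powr q) \<le> h y"
      using unif_convex_secant_ineq[OF N h, of t z "y - z"] t unfolding yt_def by simp
    ultimately show ?thesis
      using descent by linarith
  qed
  moreover have "((\<lambda>t. \<Psi> z + h z + \<gamma> / q * ((1 - t) powr q * N (y - z) powr q))
      \<longlongrightarrow> \<Psi> z + h z + \<gamma> / q * (1 * N (y - z) powr q)) (at_right 0)"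
    by (intro tendsto_intros tendsto_one_minus_powr_at_right)
  ultimately show ?thesis
    using tendsto_at_right_0_le by fastforce
qed

section \<open>Multilinear forms\<close>

lemma multilinear_form_linear:
  assumes "multilinear_form p T" "length us + length vs + 1 = p"
  shows "linear (\<lambda>y. T (us @ y # vs))"
  using assms unfolding multilinear_form_def by blast

lemma multilinear_form_scaleR:
  assumes ml: "multilinear_form p T"
  shows "length us + length ys = p \<Longrightarrow> length cs = length ys \<Longrightarrow>
    T (us @ map2 scaleR cs ys) = prod_list cs * T (us @ ys)"
proof (induction ys arbitrary: us cs)
  case (Cons y ys)
  then obtain c cs' where cs: "cs = c # cs'"
    by (cases cs) auto
  have lin: "linear (\<lambda>z. T (us @ z # map2 scaleR cs' ys))"
    using Cons.prems cs by (intro multilinear_form_linear[OF ml]) auto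
  have "T (us @ map2 scaleR cs (y # ys)) = T (us @ (c *\<^sub>R y) # map2 scaleR cs' ys)"
    using cs by simp
  also have "\<dots> = c * T ((us @ [y]) @ map2 scaleR cs' ys)"
    using linear_cmul[OF lin] by simp
  also have "\<dots> = c * (prod_list cs' * T ((us @ [y]) @ ys))"
    using Cons.IH[of "us @ [y]" cs'] Cons.prems cs by simp
  finally show ?case
    using cs by simp
qed simp

lemma multilinear_form_eq_0:
  assumes ml: "multilinear_form p T" and len: "length ys = p" and zero: "0 \<in> set ys"
  shows "T ys = 0"
proof -
  define cs where "cs = map (\<lambda>y. if y = 0 then 0 else (1::real)) ys"
  have "map2 scaleR cs ys = ys"
    unfolding cs_def by (induction ys) auto
  moreover have "prod_list cs = 0"
    unfolding cs_def using zero by (induction ys) auto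
  ultimately show ?thesis
    using multilinear_form_scaleR[OF ml, of "[]" ys cs] len unfolding cs_def by simp
qed

lemma multilinear_form_bounded:
  fixes T :: "'a::euclidean_space list \<Rightarrow> real"
  shows "multilinear_form p T \<Longrightarrow> \<exists>B\<ge>0. \<forall>ys. length ys = p \<longrightarrow> \<bar>T ys\<bar> \<le> B * prod_list (map norm ys)"
proof (induction p arbitrary: T)
  case 0
  then show ?case
    by (intro exI[of _ "\<bar>T []\<bar>"]) auto
next
  case (Suc p)
  have "multilinear_form p (\<lambda>ys. T (b # ys))" for b
    unfolding multilinear_form_def
    using multilinear_form_linear[OF Suc.prems, of "b # us" vs for us vs] by simp
  then have "\<forall>b. \<exists>B\<ge>0. \<forall>ys. length ys = p \<longrightarrow> \<bar>T (b # ys)\<bar> \<le> B * prod_list (map norm ys)"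
    using Suc.IH by blast
  then obtain Bf where Bf: "\<And>b. Bf b \<ge> 0"
    "\<And>b ys. length ys = p \<Longrightarrow> \<bar>T (b # ys)\<bar> \<le> Bf b * prod_list (map norm ys)"
    by metis
  show ?case
  proof (intro exI[of _ "\<Sum>b\<in>Basis. Bf b"] conjI allI impI)
    show "0 \<le> (\<Sum>b\<in>Basis. Bf b)"
      using Bf(1) by (simp add: sum_nonneg)
    fix ys :: "'a list"
    assume "length ys = Suc p"
    then obtain y zs where ys: "ys = y # zs" and zs: "length zs = p"
      by (cases ys) auto
    have lin: "linear (\<lambda>y. T ([] @ y # zs))"
      using multilinear_form_linear[OF Suc.prems, of "[]" zs] zs by simp
    have "T ys = T ((\<Sum>b\<in>Basis. (y \<bullet> b) *\<^sub>R b) # zs)"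
      using ys by (simp add: euclidean_representation)
    also have "\<dots> = (\<Sum>b\<in>Basis. (y \<bullet> b) * T (b # zs))"
      using linear_sum[OF lin, of "\<lambda>b. (y \<bullet> b) *\<^sub>R b" Basis] linear_cmul[OF lin] by simp
    also have "\<bar>\<dots>\<bar> \<le> (\<Sum>b\<in>Basis. \<bar>y \<bullet> b\<bar> * \<bar>T (b # zs)\<bar>)"
      by (rule order_trans[OF sum_abs]) (simp add: abs_mult)
    also have "\<dots> \<le> (\<Sum>b\<in>Basis. norm y * (Bf b * prod_list (map norm zs)))"
      by (intro sum_mono mult_mono) (auto simp: Basis_le_norm Bf zs)
    also have "\<dots> = (\<Sum>b\<in>Basis. Bf b) * prod_list (map norm ys)"
      using ys by (simp add: sum_distrib_right sum_distrib_left algebra_simps)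
    finally show "\<bar>T ys\<bar> \<le> (\<Sum>b\<in>Basis. Bf b) * prod_list (map norm ys)" .
  qed
qed

lemma prod_list_le_power:
  fixes f :: "'b \<Rightarrow> real"
  assumes "\<And>y. y \<in> set ys \<Longrightarrow> 0 \<le> f y \<and> f y \<le> c"
  shows "prod_list (map f ys) \<le> c ^ length ys"
  using assms
proof (induction ys)
  case (Cons y ys)
  then have "0 \<le> f y" "f y \<le> c"
    by auto
  then have "0 \<le> c"
    by linarith
  then show ?case
    using Cons by (auto intro!: mult_mono prod_list_nonneg)
qed simp

context
  fixes N :: "'a::euclidean_space \<Rightarrow> real"
  assumes N: "is_norm N"
begin

lemma bdd_above_multilinear_form:
  assumes ml: "multilinear_form p T"
  shows "bdd_above {T ys | ys. length ys = p \<and> (\<forall>y\<in>set ys. N y \<le> 1)}"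
proof -
  obtain c where c: "c > 0" "\<And>x. c * norm x \<le> N x"
    using is_norm_ge_norm[OF N] by blast
  obtain B where B: "B \<ge> 0" "\<And>ys. length ys = p \<Longrightarrow> \<bar>T ys\<bar> \<le> B * prod_list (map norm ys)"
    using multilinear_form_bounded[OF ml] by blast
  show ?thesis
  proof (rule bdd_aboveI[where M = "B * (1 / c) ^ p"])
    fix r
    assume "r \<in> {T ys | ys. length ys = p \<and> (\<forall>y\<in>set ys. N y \<le> 1)}"
    then obtain ys where r: "r = T ys" and len: "length ys = p" and small: "\<forall>y\<in>set ys. N y \<le> 1"
      by blast
    have "norm y \<le> 1 / c" if "y \<in> set ys" for y
      using small that c(2)[of y] c(1) by (simp add: field_simps) (meson order_trans)
    then have "prod_list (map norm ys) \<le> (1 / c) ^ p"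
      using prod_list_le_power[of ys norm "1 / c"] len by simp
    then show "r \<le> B * (1 / c) ^ p"
      using B len r by (smt (verit) mult_left_mono)
  qed
qed

lemma multilinear_form_le_form_norm:
  assumes ml: "multilinear_form p T" and len: "length ys = p"
  shows "T ys \<le> form_norm N p T * prod_list (map N ys)"
proof (cases "0 \<in> set ys")
  case True
  then have "prod_list (map N ys) = 0"
    by (force simp: is_norm_zero[OF N] prod_list_zero_iff)
  then show ?thesis
    using multilinear_form_eq_0[OF ml len True] by simp
next
  case False
  then have pos: "N y > 0" if "y \<in> set ys" for y
    using that is_norm_nonneg[OF N, of y] is_norm_eq_0_iff[OF N, of y] by force
  define zs where "zs = map (\<lambda>y. (1 / N y) *\<^sub>R y) ys"
  have "N y *\<^sub>R ((1 / N y) *\<^sub>R y) = y" if "y \<in> set ys" for y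
    using pos[OF that] by simp
  then have "map2 scaleR (map N ys) zs = ys"
    unfolding zs_def by (induction ys) auto
  then have "T ys = prod_list (map N ys) * T zs"
    using multilinear_form_scaleR[OF ml, of "[]" zs "map N ys"] len unfolding zs_def by simp
  moreover have "T zs \<le> form_norm N p T"
    unfolding form_norm_def
  proof (rule cSup_upper[OF _ bdd_above_multilinear_form[OF ml]])
    have "\<forall>y\<in>set zs. N y \<le> 1"
      unfolding zs_def by (auto simp: is_norm_scaleR[OF N] abs_of_pos pos)
    moreover have "length zs = p"
      using len unfolding zs_def by simp
    ultimately show "T zs \<in> {T ys |ys. length ys = p \<and> (\<forall>y\<in>set ys. N y \<le> 1)}"
      by blast
  qed
  moreover have "prod_list (map N ys) \<ge> 0"
    by (intro prod_list_nonneg) (auto simp: is_norm_nonneg[OF N])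
  ultimately show ?thesis
    by (simp add: mult.commute mult_right_mono)
qed

lemma abs_multilinear_form_le_form_norm:
  assumes ml: "multilinear_form p T" and len: "length ys = p" and p: "p \<ge> 1"
  shows "\<bar>T ys\<bar> \<le> form_norm N p T * prod_list (map N ys)"
proof -
  obtain y zs where ys: "ys = y # zs"
    using len p by (cases ys) auto
  have lin: "linear (\<lambda>u. T ([] @ u # zs))"
    using multilinear_form_linear[OF ml, of "[]" zs] len ys by simp
  have "- T ys = T ((- y) # zs)"
    using linear_neg[OF lin, of y] ys by simp
  also have "\<dots> \<le> form_norm N p T * prod_list (map N ys)"
    using multilinear_form_le_form_norm[OF ml, of "(- y) # zs"] len ys by (simp add: is_norm_minus[OF N])
  finally show ?thesis
    using multilinear_form_le_form_norm[OF ml len] by linarith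
qed

end

section \<open>Derivatives and the Taylor model\<close>

lemma has_real_derivative_along_line:
  fixes f :: "'a::real_normed_vector \<Rightarrow> real"
  assumes "(f has_derivative F) (at (x + s *\<^sub>R a))"
  shows "((\<lambda>s. f (x + s *\<^sub>R a)) has_real_derivative F a) (at s)"
proof -
  have "((\<lambda>s. x + s *\<^sub>R a) has_derivative (\<lambda>s. s *\<^sub>R a)) (at s)"
    by (auto intro!: derivative_eq_intros)
  from has_derivative_compose[OF this assms]
  have "((\<lambda>s. f (x + s *\<^sub>R a)) has_derivative (\<lambda>h. F (h *\<^sub>R a))) (at s)" .
  moreover have "(\<lambda>h. F (h *\<^sub>R a)) = (*) (F a)"
    using linear_cmul[OF has_derivative_linear[OF assms]] by (auto simp: fun_eq_iff mult.commute)
  ultimately show ?thesis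
    unfolding has_field_derivative_def by simp
qed

lemma second_difference_approx:
  fixes f :: "'a::real_normed_vector \<Rightarrow> real"
  assumes d1: "\<And>y. (f has_derivative f' y) (at y)"
    and d2: "((\<lambda>y. f' y a) has_derivative f'') (at x)"
    and e: "e > 0"
  shows "\<exists>\<delta>>0. \<forall>t. 0 < t \<and> t < \<delta> \<longrightarrow>
     \<bar>(f (x + t *\<^sub>R a + t *\<^sub>R b) - f (x + t *\<^sub>R a) - f (x + t *\<^sub>R b) + f x) - t\<^sup>2 * f'' b\<bar>
       \<le> e * t\<^sup>2 * (2 * norm a + norm b)"
proof -
  have lin: "linear f''"
    using d2 by (rule has_derivative_linear)
  have "\<forall>e>0. \<exists>d>0. \<forall>y. norm (y - x) < d \<longrightarrow> norm (f' y a - f' x a - f'' (y - x)) \<le> e * norm (y - x)"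
    using d2 unfolding has_derivative_at_alt by simp
  then obtain d where d: "d > 0" "\<And>y. norm (y - x) < d \<Longrightarrow> \<bar>f' y a - f' x a - f'' (y - x)\<bar> \<le> e * norm (y - x)"
    using e by auto
  have Kp: "norm a + norm b + 1 > 0"
    by (simp add: add_nonneg_pos)
  define \<delta> where "\<delta> = d / (norm a + norm b + 1)"
  have "\<delta> > 0"
    unfolding \<delta>_def using d Kp by simp
  moreover have "\<bar>(f (x + t *\<^sub>R a + t *\<^sub>R b) - f (x + t *\<^sub>R a) - f (x + t *\<^sub>R b) + f x) - t\<^sup>2 * f'' b\<bar>
      \<le> e * t\<^sup>2 * (2 * norm a + norm b)" if t: "0 < t" "t < \<delta>" for t
  proof -
    have small: "t * (norm a + norm b) < d"
    proof -
      have "t * (norm a + norm b) \<le> t * (norm a + norm b + 1)"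
        using t by simp
      also have "\<dots> < \<delta> * (norm a + norm b + 1)"
        using t by (intro mult_strict_right_mono) (auto simp: add_nonneg_pos)
      also have "\<dots> = d"
        unfolding \<delta>_def using Kp by simp
      finally show ?thesis .
    qed
    define \<phi> where "\<phi> s = f (x + t *\<^sub>R b + s *\<^sub>R a) - f (x + s *\<^sub>R a)" for s
    have "\<forall>s. (\<phi> has_real_derivative (f' (x + t *\<^sub>R b + s *\<^sub>R a) a - f' (x + s *\<^sub>R a) a)) (at s)"
      unfolding \<phi>_def by (intro allI DERIV_diff has_real_derivative_along_line d1)
    then have "\<exists>\<sigma>. 0 < \<sigma> \<and> \<sigma> < t \<and>
        \<phi> t - \<phi> 0 = (t - 0) * (f' (x + t *\<^sub>R b + \<sigma> *\<^sub>R a) a - f' (x + \<sigma> *\<^sub>R a) a)"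
      using t by (intro MVT2[of 0 t \<phi> "\<lambda>s. f' (x + t *\<^sub>R b + s *\<^sub>R a) a - f' (x + s *\<^sub>R a) a"]) auto
    then obtain \<sigma> where \<sigma>: "0 < \<sigma>" "\<sigma> < t"
      "\<phi> t - \<phi> 0 = (t - 0) * (f' (x + t *\<^sub>R b + \<sigma> *\<^sub>R a) a - f' (x + \<sigma> *\<^sub>R a) a)"
      by blast
    define y1 where "y1 = x + t *\<^sub>R b + \<sigma> *\<^sub>R a"
    define y2 where "y2 = x + \<sigma> *\<^sub>R a"
    have n1: "norm (y1 - x) \<le> t * (norm a + norm b)"
    proof -
      have "y1 - x = t *\<^sub>R b + \<sigma> *\<^sub>R a"
        unfolding y1_def by simp
      then have "norm (y1 - x) \<le> norm (t *\<^sub>R b) + norm (\<sigma> *\<^sub>R a)"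
        by (simp only: norm_triangle_ineq)
      also have "\<dots> \<le> t * norm b + t * norm a"
        using t \<sigma> by (simp add: mult_right_mono)
      finally show ?thesis
        by (simp add: algebra_simps)
    qed
    have n2: "norm (y2 - x) \<le> t * norm a"
      unfolding y2_def using t \<sigma> by (simp add: mult_right_mono)
    have "\<bar>f' y1 a - f' x a - f'' (y1 - x)\<bar> \<le> e * norm (y1 - x)"
      using d(2)[of y1] n1 small by simp
    also have "\<dots> \<le> e * (t * (norm a + norm b))"
      using n1 e by (intro mult_left_mono) auto
    finally have e1: "\<bar>f' y1 a - f' x a - f'' (y1 - x)\<bar> \<le> e * (t * (norm a + norm b))" .
    have "t * norm a \<le> t * (norm a + norm b)"
      using t by (intro mult_left_mono) auto
    then have "\<bar>f' y2 a - f' x a - f'' (y2 - x)\<bar> \<le> e * norm (y2 - x)"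
      using d(2)[of y2] n2 small by simp
    also have "\<dots> \<le> e * (t * norm a)"
      using n2 e by (intro mult_left_mono) auto
    finally have e2: "\<bar>f' y2 a - f' x a - f'' (y2 - x)\<bar> \<le> e * (t * norm a)" .
    have "f'' (y1 - x) - f'' (y2 - x) = f'' ((y1 - x) - (y2 - x))"
      using linear_diff[OF lin] by simp
    also have "(y1 - x) - (y2 - x) = t *\<^sub>R b"
      unfolding y1_def y2_def by simp
    finally have "f'' (y1 - x) - f'' (y2 - x) = t * f'' b"
      using linear_cmul[OF lin] by simp
    then have "\<bar>(f' y1 a - f' y2 a) - t * f'' b\<bar> \<le> e * (t * (norm a + norm b)) + e * (t * norm a)"
      using e1 e2 by linarith
    then have bound: "t * \<bar>(f' y1 a - f' y2 a) - t * f'' b\<bar> \<le> t * (e * (t * (norm a + norm b)) + e * (t * norm a))"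
      using t by (intro mult_left_mono) auto
    have "f (x + t *\<^sub>R a + t *\<^sub>R b) - f (x + t *\<^sub>R a) - f (x + t *\<^sub>R b) + f x = t * (f' y1 a - f' y2 a)"
      using \<sigma>(3) unfolding \<phi>_def y1_def y2_def by (simp add: algebra_simps)
    then have "\<bar>(f (x + t *\<^sub>R a + t *\<^sub>R b) - f (x + t *\<^sub>R a) - f (x + t *\<^sub>R b) + f x) - t\<^sup>2 * f'' b\<bar>
        = \<bar>t * ((f' y1 a - f' y2 a) - t * f'' b)\<bar>"
      by (simp add: power2_eq_square right_diff_distrib)
    also have "\<dots> = t * \<bar>(f' y1 a - f' y2 a) - t * f'' b\<bar>"
      using t by (simp add: abs_mult)
    also have "\<dots> \<le> t * (e * (t * (norm a + norm b)) + e * (t * norm a))"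
      by (rule bound)
    also have "\<dots> = e * t\<^sup>2 * (2 * norm a + norm b)"
      by (simp add: power2_eq_square algebra_simps)
    finally show ?thesis .
  qed
  ultimately show ?thesis
    by blast
qed

lemma second_derivative_symmetric:
  fixes f :: "'a::real_normed_vector \<Rightarrow> real"
  assumes d1: "\<And>y. (f has_derivative f' y) (at y)"
    and d2: "\<And>h. ((\<lambda>y. f' y h) has_derivative (\<lambda>k. f'' k h)) (at x)"
  shows "f'' a b = f'' b a"
proof -
  have "\<bar>f'' b a - f'' a b\<bar> \<le> e * (3 * (norm a + norm b))" if e: "e > 0" for e
  proof -
    obtain \<delta>1 where \<delta>1: "\<delta>1 > 0" "\<And>t. 0 < t \<Longrightarrow> t < \<delta>1 \<Longrightarrow>
       \<bar>(f (x + t *\<^sub>R a + t *\<^sub>R b) - f (x + t *\<^sub>R a) - f (x + t *\<^sub>R b) + f x) - t\<^sup>2 * f'' b a\<bar>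
         \<le> e * t\<^sup>2 * (2 * norm a + norm b)"
      using second_difference_approx[OF d1 d2 e, of a b] by blast
    obtain \<delta>2 where \<delta>2: "\<delta>2 > 0" "\<And>t. 0 < t \<Longrightarrow> t < \<delta>2 \<Longrightarrow>
       \<bar>(f (x + t *\<^sub>R b + t *\<^sub>R a) - f (x + t *\<^sub>R b) - f (x + t *\<^sub>R a) + f x) - t\<^sup>2 * f'' a b\<bar>
         \<le> e * t\<^sup>2 * (2 * norm b + norm a)"
      using second_difference_approx[OF d1 d2 e, of b a] by blast
    define t where "t = min \<delta>1 \<delta>2 / 2"
    have t: "0 < t" "t < \<delta>1" "t < \<delta>2"
      unfolding t_def using \<delta>1 \<delta>2 by auto
    define \<Delta> where "\<Delta> = f (x + t *\<^sub>R a + t *\<^sub>R b) - f (x + t *\<^sub>R a) - f (x + t *\<^sub>R b) + f x"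
    have "x + t *\<^sub>R b + t *\<^sub>R a = x + t *\<^sub>R a + t *\<^sub>R b"
      by (simp add: algebra_simps)
    then have "\<bar>\<Delta> - t\<^sup>2 * f'' a b\<bar> \<le> e * t\<^sup>2 * (2 * norm b + norm a)"
      using \<delta>2(2)[OF t(1,3)] unfolding \<Delta>_def by (simp add: algebra_simps)
    moreover have "\<bar>\<Delta> - t\<^sup>2 * f'' b a\<bar> \<le> e * t\<^sup>2 * (2 * norm a + norm b)"
      using \<delta>1(2)[OF t(1,2)] unfolding \<Delta>_def .
    ultimately have "\<bar>t\<^sup>2 * f'' b a - t\<^sup>2 * f'' a b\<bar> \<le> e * t\<^sup>2 * (2 * norm a + norm b) + e * t\<^sup>2 * (2 * norm b + norm a)"
      by linarith
    moreover have "\<bar>t\<^sup>2 * f'' b a - t\<^sup>2 * f'' a b\<bar> = t\<^sup>2 * \<bar>f'' b a - f'' a b\<bar>"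
      by (simp add: abs_mult flip: right_diff_distrib)
    ultimately have "t\<^sup>2 * \<bar>f'' b a - f'' a b\<bar> \<le> t\<^sup>2 * (e * (3 * (norm a + norm b)))"
      by (simp add: algebra_simps)
    then show ?thesis
      using t by simp
  qed
  note approx = this
  have "\<bar>f'' b a - f'' a b\<bar> \<le> 0 + e" if "e > 0" for e
  proof -
    define K where "K = 3 * (norm a + norm b)"
    have K: "K \<ge> 0"
      unfolding K_def by simp
    have "e / (K + 1) > 0"
      using that K by simp
    from approx[OF this] have "\<bar>f'' b a - f'' a b\<bar> \<le> e / (K + 1) * K"
      unfolding K_def .
    also have "\<dots> \<le> e"
      using that K by (simp add: field_simps)
    finally show ?thesis
      by simp
  qed
  then show ?thesis
    using field_le_epsilon[of "\<bar>f'' b a - f'' a b\<bar>" 0] by simp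
qed

context
  fixes N :: "'a::euclidean_space \<Rightarrow> real" and p :: nat and \<nu> L :: real
    and Dg :: "nat \<Rightarrow> 'a \<Rightarrow> 'a list \<Rightarrow> real" and g :: "'a \<Rightarrow> real"
  assumes hd: "holder_derivs N p \<nu> L Dg g"
begin

lemma holder_derivs_Dg0: "Dg 0 x [] = g x"
  using hd unfolding holder_derivs_def by blast

lemma holder_derivs_multilinear: "i \<le> p \<Longrightarrow> multilinear_form i (Dg i x)"
  using hd unfolding holder_derivs_def by blast

lemma holder_derivs_has_derivative:
  "i < p \<Longrightarrow> length hs = i \<Longrightarrow> ((\<lambda>y. Dg i y hs) has_derivative (\<lambda>h. Dg (Suc i) x (h # hs))) (at x)"
  using hd unfolding holder_derivs_def by blast

lemma holder_derivs_holder: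
  "form_norm N p (\<lambda>ys. Dg p x ys - Dg p y ys) / fact (p - 1) \<le> L * N (x - y) powr \<nu>"
  using hd unfolding holder_derivs_def by blast

lemma holder_derivs_gradient:
  assumes "p \<ge> 1"
  shows "(g has_derivative (\<lambda>h. Dg 1 x [h])) (at x)"
  using holder_derivs_has_derivative[of 0 "[]" x] assms by (simp add: holder_derivs_Dg0)

lemma holder_derivs_gradient_linear:
  assumes "p \<ge> 1"
  shows "linear (\<lambda>h. Dg 1 x [h])"
  using multilinear_form_linear[OF holder_derivs_multilinear[of 1 x], of "[]" "[]"] assms by simp

lemma holder_derivs_swap:
  "i \<le> p \<Longrightarrow> length us + length vs + 2 = i \<Longrightarrow>
    Dg i x (us @ a # b # vs) = Dg i x (us @ b # a # vs)"
proof (induction us arbitrary: i x)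
  case Nil
  then obtain m where i: "i = Suc (Suc m)" and vs: "length vs = m"
    by auto
  have d1: "((\<lambda>y. Dg m y vs) has_derivative (\<lambda>h. Dg (Suc m) y (h # vs))) (at y)" for y
    using holder_derivs_has_derivative[of m vs y] Nil vs i by simp
  have d2: "((\<lambda>y. Dg (Suc m) y (h # vs)) has_derivative (\<lambda>k. Dg (Suc (Suc m)) x (k # h # vs))) (at x)" for h
    using holder_derivs_has_derivative[of "Suc m" "h # vs" x] Nil vs i by simp
  show ?case
    using second_derivative_symmetric[OF d1 d2, of a b] i by simp
next
  case (Cons c us)
  then obtain j where i: "i = Suc j"
    by (cases i) auto
  have "(\<lambda>y. Dg j y (us @ a # b # vs)) = (\<lambda>y. Dg j y (us @ b # a # vs))"
    using Cons.IH[of j] Cons.prems i by auto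
  then have "(\<lambda>h. Dg (Suc j) x (h # us @ a # b # vs)) = (\<lambda>h. Dg (Suc j) x (h # us @ b # a # vs))"
    using holder_derivs_has_derivative[of j "us @ a # b # vs" x]
      holder_derivs_has_derivative[of j "us @ b # a # vs" x] Cons.prems i
    by (intro has_derivative_unique) auto
  then show ?case
    using i by (metis append_Cons)
qed

lemma holder_derivs_move_last:
  "i \<le> p \<Longrightarrow> j + m + 1 = i \<Longrightarrow>
    Dg i x (replicate j w @ v # replicate m w) = Dg i x (replicate (j + m) w @ [v])"
proof (induction m arbitrary: j)
  case (Suc m)
  have "Dg i x (replicate j w @ v # replicate (Suc m) w) = Dg i x (replicate (Suc j) w @ v # replicate m w)"
    using holder_derivs_swap[of i "replicate j w" "replicate m w" x v w] Suc.prems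
    by (simp add: replicate_app_Cons_same)
  also have "\<dots> = Dg i x (replicate (Suc j + m) w @ [v])"
    using Suc.IH[of "Suc j"] Suc.prems by simp
  finally show ?case
    by simp
qed simp

end

lemma multilinear_form_line_derivative:
  assumes ml: "multilinear_form n T"
  shows "length us + k = n \<Longrightarrow>
    ((\<lambda>t. T (us @ replicate k (w + t *\<^sub>R v))) has_real_derivative
      (\<Sum>j<k. T (us @ replicate j w @ v # replicate (k - 1 - j) w))) (at 0)"
proof (induction k arbitrary: us)
  case (Suc k)
  have lin: "linear (\<lambda>y. T (us @ y # replicate k (w + t *\<^sub>R v)))" for t
    using Suc.prems by (intro multilinear_form_linear[OF ml]) auto
  have split: "T (us @ replicate (Suc k) (w + t *\<^sub>R v)) =
      T ((us @ [w]) @ replicate k (w + t *\<^sub>R v)) + t * T ((us @ [v]) @ replicate k (w + t *\<^sub>R v))" for t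
    using linear_add[OF lin[of t], of w "t *\<^sub>R v"] linear_cmul[OF lin[of t], of t v] by simp
  have D1: "((\<lambda>t. T ((us @ [w]) @ replicate k (w + t *\<^sub>R v))) has_real_derivative
      (\<Sum>j<k. T ((us @ [w]) @ replicate j w @ v # replicate (k - 1 - j) w))) (at 0)"
    using Suc.IH[of "us @ [w]"] Suc.prems by simp
  have D2: "((\<lambda>t. T ((us @ [v]) @ replicate k (w + t *\<^sub>R v))) has_real_derivative
      (\<Sum>j<k. T ((us @ [v]) @ replicate j w @ v # replicate (k - 1 - j) w))) (at 0)"
    using Suc.IH[of "us @ [v]"] Suc.prems by simp
  have D3: "((\<lambda>t. t * T ((us @ [v]) @ replicate k (w + t *\<^sub>R v))) has_real_derivative
      T (us @ v # replicate k w)) (at 0)"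
    by (rule DERIV_cong[OF DERIV_mult[OF DERIV_ident D2]]) simp
  have "(\<Sum>j<Suc k. T (us @ replicate j w @ v # replicate (Suc k - 1 - j) w)) =
     (\<Sum>j<k. T ((us @ [w]) @ replicate j w @ v # replicate (k - 1 - j) w)) + T (us @ v # replicate k w)"
    by (subst sum.lessThan_Suc_shift) (simp add: replicate_app_Cons_same)
  then show ?case
    unfolding split using DERIV_add[OF D1 D3] by simp
qed simp

definition taylor_model_deriv :: "(nat \<Rightarrow> 'a::real_vector \<Rightarrow> 'a list \<Rightarrow> real) \<Rightarrow> nat \<Rightarrow> 'a \<Rightarrow> 'a \<Rightarrow> 'a \<Rightarrow> real"
  where "taylor_model_deriv Dg p y x v = (\<Sum>m<p. Dg (Suc m) y (replicate m (x - y) @ [v]) / fact m)"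

context
  fixes N :: "'a::euclidean_space \<Rightarrow> real" and p :: nat and \<nu> L :: real
    and Dg :: "nat \<Rightarrow> 'a \<Rightarrow> 'a list \<Rightarrow> real" and g :: "'a \<Rightarrow> real"
  assumes hd: "holder_derivs N p \<nu> L Dg g"
begin

lemma taylor_model_line_derivative:
  "((\<lambda>t. taylor_model Dg p y (x + t *\<^sub>R v)) has_real_derivative taylor_model_deriv Dg p y x v) (at 0)"
proof -
  define w where "w = x - y"
  have model: "taylor_model Dg p y (x + t *\<^sub>R v) =
     Dg 0 y [] + (\<Sum>i=1..p. Dg i y (replicate i (w + t *\<^sub>R v)) / fact i)" for t
    unfolding taylor_model_def w_def by (simp add: algebra_simps)
  have summand: "((\<lambda>t. Dg i y (replicate i (w + t *\<^sub>R v)) / fact i) has_real_derivative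
       (of_nat i * Dg i y (replicate (i - 1) w @ [v])) / fact i) (at 0)" if i: "i \<in> {1..p}" for i
  proof -
    have "((\<lambda>t. Dg i y ([] @ replicate i (w + t *\<^sub>R v))) has_real_derivative
      (\<Sum>j<i. Dg i y ([] @ replicate j w @ v # replicate (i - 1 - j) w))) (at 0)"
      using multilinear_form_line_derivative[OF holder_derivs_multilinear[OF hd, of i y], of "[]" i w v] i
      by simp
    moreover have "Dg i y (replicate j w @ v # replicate (i - 1 - j) w) = Dg i y (replicate (i - 1) w @ [v])"
      if "j < i" for j
      using holder_derivs_move_last[OF hd, of i j "i - 1 - j" y w v] i that by simp
    ultimately show ?thesis
      by (intro DERIV_cdivide) simp
  qed
  have "((\<lambda>t. taylor_model Dg p y (x + t *\<^sub>R v)) has_real_derivative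
      0 + (\<Sum>i=1..p. (of_nat i * Dg i y (replicate (i - 1) w @ [v])) / fact i)) (at 0)"
    unfolding model by (intro DERIV_add DERIV_const DERIV_sum summand)
  moreover have "(\<Sum>i=1..p. (of_nat i * Dg i y (replicate (i - 1) w @ [v])) / fact i) =
      (\<Sum>m<p. (of_nat (Suc m) * Dg (Suc m) y (replicate m w @ [v])) / fact (Suc m))"
    by (simp add: sum.atLeast1_atMost_eq)
  moreover have "of_nat (Suc m) * X / fact (Suc m) = X / fact m" for m and X :: real
  proof -
    have "of_nat (Suc m) * X / fact (Suc m) = (of_nat (Suc m) * X) / (of_nat (Suc m) * fact m)"
      by (simp only: fact_Suc of_nat_mult)
    also have "\<dots> = X / fact m"
      by (rule mult_divide_mult_cancel_left) simp
    finally show ?thesis .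
  qed
  ultimately show ?thesis
    unfolding taylor_model_deriv_def w_def by simp
qed

lemma holder_derivs_gradient_remainder:
  assumes p: "p \<ge> 1"
  shows "\<exists>t. 0 \<le> t \<and> t \<le> 1 \<and> Dg 1 (y + w) [v] - taylor_model_deriv Dg p y (y + w) v =
    (Dg p (y + t *\<^sub>R w) (replicate (p - 1) w @ [v]) - Dg p y (replicate (p - 1) w @ [v])) / fact (p - 1)"
proof -
  define diff where "diff m s = Dg (Suc m) (y + s *\<^sub>R w) (replicate m w @ [v])" for m s
  have model: "taylor_model_deriv Dg p y (y + w) v = (\<Sum>m<p. diff m 0 / fact m)"
    unfolding taylor_model_deriv_def diff_def by simp
  show ?thesis
  proof (cases "p = 1")
    case True
    then show ?thesis
      unfolding model by (intro exI[of _ 1]) (simp add: diff_def)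
  next
    case False
    then have p1: "0 < p - 1"
      using p by simp
    have ds: "\<forall>m t. m < p - 1 \<and> 0 \<le> t \<and> t \<le> 1 \<longrightarrow> DERIV (diff m) t :> diff (Suc m) t"
    proof (intro allI impI)
      fix m and t :: real
      assume that: "m < p - 1 \<and> 0 \<le> t \<and> t \<le> 1"
      have "((\<lambda>y. Dg (Suc m) y (replicate m w @ [v])) has_derivative
          (\<lambda>h. Dg (Suc (Suc m)) (y + t *\<^sub>R w) (h # replicate m w @ [v]))) (at (y + t *\<^sub>R w))"
        using holder_derivs_has_derivative[OF hd, of "Suc m" "replicate m w @ [v]" "y + t *\<^sub>R w"] that
        by (simp add: less_diff_conv)
      from has_real_derivative_along_line[OF this] show "DERIV (diff m) t :> diff (Suc m) t"
        unfolding diff_def by (simp add: replicate_app_Cons_same)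
    qed
    then obtain t where t: "0 < t" "t < 1"
      "diff 0 1 = (\<Sum>m<p - 1. diff m 0 / fact m * 1 ^ m) + diff (p - 1) t / fact (p - 1) * 1 ^ (p - 1)"
      using Maclaurin[OF zero_less_one p1 refl ds] by blast
    have pS: "p = Suc (p - 1)"
      using p by simp
    have "(\<Sum>m<p. diff m 0 / fact m) = (\<Sum>m<p - 1. diff m 0 / fact m) + diff (p - 1) 0 / fact (p - 1)"
      by (subst pS) (simp only: sum.lessThan_Suc diff_Suc_1)
    moreover have "diff 0 1 = Dg 1 (y + w) [v]"
      unfolding diff_def by simp
    ultimately show ?thesis
      using t pS[symmetric] unfolding model diff_def by (intro exI[of _ t]) (simp add: diff_divide_distrib)
  qed
qed

lemma taylor_model_deriv_error:
  assumes N: "is_norm N" and p: "p \<ge> 1" and \<nu>: "\<nu> \<ge> 0" and L: "L \<ge> 0"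
  shows "\<bar>Dg 1 x [v] - taylor_model_deriv Dg p y x v\<bar> \<le> L * N (x - y) powr \<nu> * N (x - y) ^ (p - 1) * N v"
proof -
  define w where "w = x - y"
  define R where "R = replicate (p - 1) w @ [v]"
  obtain t where t: "0 \<le> t" "t \<le> 1"
    and rem: "Dg 1 x [v] - taylor_model_deriv Dg p y x v = (Dg p (y + t *\<^sub>R w) R - Dg p y R) / fact (p - 1)"
    using holder_derivs_gradient_remainder[OF p, of y w v] unfolding w_def R_def by auto
  define T where "T ys = Dg p (y + t *\<^sub>R w) ys - Dg p y ys" for ys
  have "multilinear_form p T"
    unfolding multilinear_form_def T_def
  proof (intro allI impI)
    fix us vs :: "'a list"
    assume "length us + length vs + 1 = p"
    then show "linear (\<lambda>z. Dg p (y + t *\<^sub>R w) (us @ z # vs) - Dg p y (us @ z # vs))"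
      using multilinear_form_linear[OF holder_derivs_multilinear[OF hd, of p]] by (intro linear_compose_sub) auto
  qed
  then have "\<bar>T R\<bar> \<le> form_norm N p T * prod_list (map N R)"
    using abs_multilinear_form_le_form_norm[OF N _ _ p, of T R] p unfolding R_def by simp
  also have "\<dots> = form_norm N p T * (N w ^ (p - 1) * N v)"
    unfolding R_def by simp
  also have "\<dots> \<le> fact (p - 1) * (L * N w powr \<nu>) * (N w ^ (p - 1) * N v)"
  proof (rule mult_right_mono)
    have "form_norm N p T / fact (p - 1) \<le> L * N (y + t *\<^sub>R w - y) powr \<nu>"
      using holder_derivs_holder[OF hd, of "y + t *\<^sub>R w" y] unfolding T_def .
    also have "N (y + t *\<^sub>R w - y) = t * N w"
      using t by (simp add: is_norm_scaleR[OF N])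
    also have "L * (t * N w) powr \<nu> \<le> L * N w powr \<nu>"
      using t \<nu> L is_norm_nonneg[OF N, of w]
      by (intro mult_left_mono powr_mono2) (auto simp: mult_left_le_one_le)
    finally show "form_norm N p T \<le> fact (p - 1) * (L * N w powr \<nu>)"
      by (simp add: divide_le_eq mult.commute)
  qed (simp add: is_norm_nonneg[OF N])
  finally show ?thesis
    using rem unfolding T_def w_def by (simp add: divide_le_eq mult_ac)
qed

end

section \<open>The regularised Taylor step\<close>

lemma young_cq:
  fixes \<beta> q \<theta> d n :: real
  assumes b: "\<beta> > 0" and q: "q > 1" and th: "\<theta> \<ge> 0" and d: "d \<ge> 0" and n: "n \<ge> 0"
  shows "cq \<beta> q * \<theta> * d powr (q - 1) * n \<le> \<beta> * n powr q / q + \<theta> powr (q / (q - 1)) * d powr q / q"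
proof -
  \<comment> \<open>Young's inequality with conjugate exponents q and q/(q-1), applied to \<beta>^(1/q) n and \<beta>^(-1/q) cq \<theta> d^(q-1)\<close>
  define q' where "q' = q / (q - 1)"
  have q': "q' > 1" "1 / q + 1 / q' = 1"
    unfolding q'_def using q by (auto simp: field_simps)
  define A where "A = \<beta> powr (1 / q) * n"
  define B where "B = cq \<beta> q * \<theta> * d powr (q - 1) * \<beta> powr (- 1 / q)"
  have cq: "cq \<beta> q > 0"
    unfolding cq_def using b q by simp
  have "A * B = cq \<beta> q * \<theta> * d powr (q - 1) * n"
  proof -
    have "\<beta> powr (1 / q) * \<beta> powr (- 1 / q) = 1"
      using b by (simp add: powr_add[symmetric])
    then show ?thesis
      unfolding A_def B_def by (simp add: algebra_simps)
  qed
  moreover have "A powr q = \<beta> * n powr q"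
    unfolding A_def using b n q by (simp add: powr_mult powr_powr)
  moreover have "B powr q' = \<theta> powr q' * d powr q / (q - 1)"
  proof -
    have "cq \<beta> q powr q' = \<beta> powr (1 / (q - 1)) / (q - 1)"
    proof -
      have "cq \<beta> q powr q' = (\<beta> * (q - 1) powr (1 - q)) powr (1 / (q - 1))"
        unfolding cq_def q'_def using b q by (simp add: powr_powr)
      also have "\<dots> = \<beta> powr (1 / (q - 1)) * (q - 1) powr ((1 - q) * (1 / (q - 1)))"
        using b q by (simp add: powr_mult powr_powr)
      also have "(1 - q) * (1 / (q - 1)) = -1"
        using q by (simp add: field_simps)
      finally show ?thesis
        using q by (simp add: powr_minus divide_inverse)
    qed
    moreover have "(d powr (q - 1)) powr q' = d powr q"
      unfolding q'_def using q by (simp add: powr_powr)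
    moreover have "(\<beta> powr (- 1 / q)) powr q' = \<beta> powr (- 1 / (q - 1))"
      unfolding q'_def using q by (simp add: powr_powr field_simps)
    moreover have "\<beta> powr (1 / (q - 1)) * \<beta> powr (- 1 / (q - 1)) = 1"
      using b by (simp add: powr_add[symmetric])
    ultimately show ?thesis
      unfolding B_def using cq th d b by (simp add: powr_mult field_simps)
  qed
  moreover have "A * B \<le> A powr q / q + B powr q' / q'"
    using Youngs_inequality[OF _ q'] q unfolding A_def B_def using b n cq th d by simp
  ultimately show ?thesis
    unfolding q'_def using q by (simp add: field_simps)
qed

lemma difference_quotient_tendsto_at_right:
  fixes f :: "real \<Rightarrow> real"
  assumes "(f has_real_derivative P) (at 0)"
  shows "((\<lambda>t. (f t - f 0) / t) \<longlongrightarrow> P) (at_right 0)"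
proof -
  have "((\<lambda>t. (f t - f 0) / (t - 0)) \<longlongrightarrow> P) (at 0)"
    using assms unfolding has_field_derivative_iff .
  then show ?thesis
    by (auto intro: tendsto_mono at_le)
qed

lemma difference_quotient_comp_tendsto_0:
  fixes \<psi> \<rho> :: "real \<Rightarrow> real"
  assumes \<psi>: "(\<psi> has_real_derivative 0) (at d)" and \<rho>: "\<And>t. 0 < t \<Longrightarrow> \<bar>\<rho> t - d\<bar> \<le> t * n"
  shows "((\<lambda>t. (\<psi> (\<rho> t) - \<psi> d) / t) \<longlongrightarrow> 0) (at_right 0)"
proof -
  define Q where "Q z = (if z = d then 0 else (\<psi> z - \<psi> d) / (z - d))" for z
  have "((\<lambda>z. (\<psi> z - \<psi> d) / (z - d)) \<longlongrightarrow> 0) (at d)"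
    using \<psi> unfolding has_field_derivative_iff .
  then have "(Q \<longlongrightarrow> 0) (at d)"
    by (rule tendsto_cong[THEN iffD1, rotated]) (auto simp: Q_def eventually_at_filter)
  then have Q: "isCont Q d"
    unfolding isCont_def Q_def by simp
  have n: "n \<ge> 0"
    using \<rho>[of 1] by simp
  have "((\<lambda>t. \<rho> t - d) \<longlongrightarrow> 0) (at_right 0)"
  proof (rule Lim_null_comparison)
    show "\<forall>\<^sub>F t in at_right 0. norm (\<rho> t - d) \<le> t * n"
      using \<rho> by (auto simp: eventually_at_filter)
    show "((\<lambda>t. t * n) \<longlongrightarrow> 0) (at_right 0)"
      by (auto intro!: tendsto_eq_intros)
  qed
  then have "(\<rho> \<longlongrightarrow> d) (at_right 0)"
    by (simp add: Lim_null[of \<rho> d])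
  then have "((\<lambda>t. Q (\<rho> t)) \<longlongrightarrow> Q d) (at_right 0)"
    by (rule isCont_tendsto_compose[OF Q])
  then have lim: "((\<lambda>t. n * \<bar>Q (\<rho> t)\<bar>) \<longlongrightarrow> 0) (at_right 0)"
    unfolding Q_def by (auto intro!: tendsto_eq_intros)
  show ?thesis
  proof (rule Lim_null_comparison[OF _ lim])
    show "\<forall>\<^sub>F t in at_right 0. norm ((\<psi> (\<rho> t) - \<psi> d) / t) \<le> n * \<bar>Q (\<rho> t)\<bar>"
      unfolding eventually_at_filter
    proof (intro always_eventually allI impI)
      fix t :: real
      assume t: "t \<noteq> 0" "t \<in> {0<..}"
      show "norm ((\<psi> (\<rho> t) - \<psi> d) / t) \<le> n * \<bar>Q (\<rho> t)\<bar>"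
      proof (cases "\<rho> t = d")
        case False
        then have "norm ((\<psi> (\<rho> t) - \<psi> d) / t) = \<bar>Q (\<rho> t)\<bar> * (\<bar>\<rho> t - d\<bar> / t)"
          unfolding Q_def using t by (simp add: abs_mult)
        also have "\<dots> \<le> \<bar>Q (\<rho> t)\<bar> * n"
          using \<rho>[of t] t by (intro mult_left_mono) (auto simp: divide_le_eq mult.commute)
        finally show ?thesis
          by (simp add: mult.commute)
      qed (use n in \<open>simp add: Q_def\<close>)
    qed
  qed
qed

lemma minimizer_difference_quotient:
  fixes f r :: "'a::real_vector \<Rightarrow> real"
  assumes r: "convex_on D r" and x: "x \<in> D" and u: "u \<in> D"
    and min: "\<And>y. y \<in> D \<Longrightarrow> f x + r x \<le> f y + r y" and t: "0 < t" "t \<le> 1"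
  shows "(f x - f (x + t *\<^sub>R (u - x))) / t \<le> r u - r x"
proof -
  have y: "x + t *\<^sub>R (u - x) = (1 - t) *\<^sub>R x + t *\<^sub>R u"
    by (simp add: algebra_simps)
  have "(1 - t) *\<^sub>R x + t *\<^sub>R u \<in> D"
    using convexD_alt[OF convex_on_imp_convex[OF r] x u] t by simp
  then have "f x + r x \<le> f (x + t *\<^sub>R (u - x)) + r ((1 - t) *\<^sub>R x + t *\<^sub>R u)"
    using min unfolding y by blast
  also have "r ((1 - t) *\<^sub>R x + t *\<^sub>R u) \<le> r x + t * (r u - r x)"
    using convex_onD[OF r, of t x u] t x u by (simp add: algebra_simps)
  finally have "f x - f (x + t *\<^sub>R (u - x)) \<le> t * (r u - r x)"
    by simp
  then show ?thesis
    using t by (simp add: divide_le_eq mult.commute)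
qed

lemma powr_balance_has_derivative_0:
  fixes c M s q d :: real
  assumes d: "d > 0" and c: "c > 0" and q: "q > 0"
  shows "((\<lambda>z. (c * M * s * d powr (s - q)) / (c * q) * z powr q - M * z powr s) has_real_derivative 0) (at d)"
proof -
  have "((\<lambda>z. (c * M * s * d powr (s - q)) / (c * q) * z powr q - M * z powr s) has_real_derivative
      (c * M * s * d powr (s - q)) / (c * q) * (q * d powr (q - 1)) - M * (s * d powr (s - 1))) (at d)"
    using d by (intro DERIV_diff DERIV_cmult has_real_derivative_powr) auto
  moreover have "d powr (s - q) * d powr (q - 1) = d powr (s - 1)"
    using d by (simp add: powr_add[symmetric])
  then have "(c * M * s * d powr (s - q)) / (c * q) * (q * d powr (q - 1)) = M * (s * d powr (s - 1))"
    using c q by (simp add: field_simps)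
  ultimately show ?thesis
    by simp
qed

text \<open>The first-order optimality condition of the regularised Taylor step, in a form that needs no
  differentiability of N: the regulariser's directional derivative is traded against the uniform
  convexity of N^q/q, weighted by \<tau>, which is chosen so that the two match to first order at
  distance N (xk - yh).\<close>
lemma regularized_step_first_order:
  fixes N :: "'a::euclidean_space \<Rightarrow> real" and lr :: "'a \<Rightarrow> real"
  assumes N: "is_norm N" and hd: "holder_derivs N p \<nu> L Dg g"
    and pu: "unif_convex N q \<beta> (\<lambda>y. N y powr q / q)" and q: "q \<ge> 1"
    and lr: "convex_on D lr" and xk: "xk \<in> D" and u: "u \<in> D"
    and opt: "\<And>y. y \<in> D \<Longrightarrow> taylor_model Dg p yh xk + M * N (xk - yh) powr s + lr xk
                 \<le> taylor_model Dg p yh y + M * N (y - yh) powr s + lr y"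
    and d: "N (xk - yh) > 0" and c: "c > 0"
    and \<tau>: "\<tau> = c * M * s * N (xk - yh) powr (s - q)" "0 \<le> \<tau>" "\<tau> \<le> 1"
  shows "\<tau> / c * (N (xk - yh) powr q / q + \<beta> / q * N (u - xk) powr q)
    \<le> taylor_model_deriv Dg p yh xk (u - xk) + lr u - lr xk + N (u - yh) powr q / (q * c)"
proof -
  define w v d n where "w = xk - yh" and "v = u - xk" and "d = N w" and "n = N v"
  define \<Phi> where "\<Phi> = taylor_model Dg p yh"
  define \<phi> where "\<phi> y = N y powr q / q" for y
  define \<psi> where "\<psi> z = \<tau> / (c * q) * z powr q - M * z powr s" for z
  define F where "F t = - (\<Phi> (xk + t *\<^sub>R v) - \<Phi> xk) / t
      + \<tau> / c * (d powr q / q + \<beta> / q * ((1 - t) powr q * n powr q)) + (\<psi> (N (w + t *\<^sub>R v)) - \<psi> d) / t" for t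
  have uw: "u - yh = w + v" and xk_t: "xk + t *\<^sub>R v - yh = w + t *\<^sub>R v" for t
    unfolding w_def v_def by simp_all
  have "F t \<le> lr u - lr xk + N (u - yh) powr q / (q * c)" if t: "0 < t" "t < 1" for t
  proof -
    have descent: "(\<Phi> xk + M * d powr s - (\<Phi> (xk + t *\<^sub>R v) + M * N (w + t *\<^sub>R v) powr s)) / t \<le> lr u - lr xk"
      using minimizer_difference_quotient[OF lr xk u, of "\<lambda>y. \<Phi> y + M * N (y - yh) powr s" t] opt t
      unfolding \<Phi>_def d_def v_def w_def by (simp add: algebra_simps)
    have "\<phi> (w + t *\<^sub>R v) + (1 - t) / t * (\<phi> (w + t *\<^sub>R v) - \<phi> w) + \<beta> / q * ((1 - t) powr q * n powr q)
        \<le> \<phi> (w + v)"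
      unfolding \<phi>_def n_def using unif_convex_secant_ineq[OF N convex_on_is_norm_powr[OF N q] pu] t by simp
    then have "\<tau> / c * (\<phi> (w + t *\<^sub>R v) + (1 - t) / t * (\<phi> (w + t *\<^sub>R v) - \<phi> w) + \<beta> / q * ((1 - t) powr q * n powr q))
        \<le> \<tau> / c * \<phi> (w + v)"
      using \<tau>(2) c by (intro mult_left_mono) simp_all
    also have "\<dots> \<le> N (u - yh) powr q / (q * c)"
    proof -
      have "\<tau> * \<phi> (w + v) \<le> \<phi> (w + v)"
        using \<tau>(2,3) q unfolding \<phi>_def by (intro mult_left_le_one_le) auto
      then have "\<tau> / c * \<phi> (w + v) \<le> \<phi> (w + v) / c"
        using c by (simp add: divide_right_mono)
      then show ?thesis
        unfolding \<phi>_def uw by simp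
    qed
    finally have bound: "\<tau> / c * (\<phi> (w + t *\<^sub>R v) + (1 - t) / t * (\<phi> (w + t *\<^sub>R v) - \<phi> w)
        + \<beta> / q * ((1 - t) powr q * n powr q)) \<le> N (u - yh) powr q / (q * c)" .
    have "F t = (\<Phi> xk + M * d powr s - (\<Phi> (xk + t *\<^sub>R v) + M * N (w + t *\<^sub>R v) powr s)) / t
        + \<tau> / c * (\<phi> (w + t *\<^sub>R v) + (1 - t) / t * (\<phi> (w + t *\<^sub>R v) - \<phi> w) + \<beta> / q * ((1 - t) powr q * n powr q))"
      unfolding F_def \<psi>_def \<phi>_def d_def using t c q by (simp add: field_simps)
    with descent bound show ?thesis
      by linarith
  qed
  moreover have "(F \<longlongrightarrow> - taylor_model_deriv Dg p yh xk v + \<tau> / c * (d powr q / q + \<beta> / q * (1 * n powr q)) + 0)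
      (at_right 0)"
  proof -
    have "((\<lambda>t. (\<Phi> (xk + t *\<^sub>R v) - \<Phi> xk) / t) \<longlongrightarrow> taylor_model_deriv Dg p yh xk v) (at_right 0)"
      using difference_quotient_tendsto_at_right[OF taylor_model_line_derivative[OF hd, of yh xk v]]
      unfolding \<Phi>_def by simp
    moreover have "((\<lambda>t. (\<psi> (N (w + t *\<^sub>R v)) - \<psi> d) / t) \<longlongrightarrow> 0) (at_right 0)"
    proof (rule difference_quotient_comp_tendsto_0[where \<rho> = "\<lambda>t. N (w + t *\<^sub>R v)" and n = n])
      show "(\<psi> has_real_derivative 0) (at d)"
        unfolding \<psi>_def \<tau>(1) using powr_balance_has_derivative_0[of d c q M s] d c q
        unfolding d_def w_def by simp
      show "\<bar>N (w + t *\<^sub>R v) - d\<bar> \<le> t * n" if "0 < t" for t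
        using is_norm_reverse_triangle[OF N, of "w + t *\<^sub>R v" w] that
        unfolding d_def n_def by (simp add: is_norm_scaleR[OF N])
    qed
    ultimately show ?thesis
      unfolding F_def minus_divide_left[symmetric]
      by (intro tendsto_add tendsto_minus tendsto_const tendsto_mult tendsto_one_minus_powr_at_right)
  qed
  ultimately have "- taylor_model_deriv Dg p yh xk v + \<tau> / c * (d powr q / q + \<beta> / q * (1 * n powr q)) + 0
      \<le> lr u - lr xk + N (u - yh) powr q / (q * c)"
    by (rule tendsto_at_right_0_le[rotated])
  then show ?thesis
    unfolding d_def n_def w_def v_def by simp
qed

lemma regularized_step_first_order_degenerate:
  fixes N :: "'a::euclidean_space \<Rightarrow> real" and lr :: "'a \<Rightarrow> real"
  assumes N: "is_norm N" and hd: "holder_derivs N p \<nu> L Dg g"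
    and lr: "convex_on D lr" and xk: "xk \<in> D" and u: "u \<in> D"
    and opt: "\<And>y. y \<in> D \<Longrightarrow> taylor_model Dg p xk xk + M * N (xk - xk) powr s + lr xk
                 \<le> taylor_model Dg p xk y + M * N (y - xk) powr s + lr y"
    and M: "M \<ge> 0" and s: "s \<ge> 2"
  shows "0 \<le> taylor_model_deriv Dg p xk xk (u - xk) + lr u - lr xk"
proof -
  define v n where "v = u - xk" and "n = N v"
  define \<Phi> where "\<Phi> = taylor_model Dg p xk"
  define F where "F t = - (\<Phi> (xk + t *\<^sub>R v) - \<Phi> xk) / t - M * t * n powr s" for t
  have "F t \<le> lr u - lr xk" if t: "0 < t" "t < 1" for t
  proof -
    have "(\<Phi> xk - (\<Phi> (xk + t *\<^sub>R v) + M * N (t *\<^sub>R v) powr s)) / t \<le> lr u - lr xk"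
      using minimizer_difference_quotient[OF lr xk u, of "\<lambda>y. \<Phi> y + M * N (y - xk) powr s" t] opt t s
      unfolding \<Phi>_def v_def by (simp add: is_norm_zero[OF N])
    moreover have "N (t *\<^sub>R v) powr s \<le> t * t * n powr s"
    proof -
      have "t powr s \<le> t powr 2"
        using t s by (intro powr_mono') auto
      then show ?thesis
        using t unfolding n_def
        by (simp add: is_norm_scaleR[OF N] powr_mult is_norm_nonneg[OF N] mult_right_mono power2_eq_square)
    qed
    then have "M * t * n powr s \<ge> M * N (t *\<^sub>R v) powr s / t"
      using t M by (simp add: divide_le_eq mult_left_mono algebra_simps)
    ultimately show ?thesis
      unfolding F_def using t by (simp add: diff_divide_distrib add_divide_distrib)
  qed
  moreover have "(F \<longlongrightarrow> - taylor_model_deriv Dg p xk xk v - M * 0 * n powr s) (at_right 0)"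
    unfolding F_def \<Phi>_def minus_divide_left[symmetric]
    using difference_quotient_tendsto_at_right[OF taylor_model_line_derivative[OF hd, of xk xk v]]
    by (intro tendsto_intros) auto
  ultimately have "- taylor_model_deriv Dg p xk xk v - M * 0 * n powr s \<le> lr u - lr xk"
    by (rule tendsto_at_right_0_le[rotated])
  then show ?thesis
    unfolding v_def by simp
qed

lemma regularized_step_gain_pos:
  fixes N :: "'a::euclidean_space \<Rightarrow> real" and lr :: "'a \<Rightarrow> real"
  assumes N: "is_norm N" and hd: "holder_derivs N p \<nu> L Dg g" and p: "p \<ge> 1" and \<nu>: "0 \<le> \<nu>"
    and L: "L > 0" and pu: "unif_convex N q \<beta> (\<lambda>y. N y powr q / q)" and \<beta>: "\<beta> > 0" and q: "2 \<le> q"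
    and lr: "convex_on D lr" and xk: "xk \<in> D" and u: "u \<in> D"
    and opt: "\<And>y. y \<in> D \<Longrightarrow> taylor_model Dg p yh xk + M * N (xk - yh) powr s + lr xk
                 \<le> taylor_model Dg p yh y + M * N (y - yh) powr s + lr y"
    and d: "N (xk - yh) > 0" and c: "c > 0" and \<theta>: "0 \<le> \<theta>"
    and \<tau>: "\<tau> = c * M * s * N (xk - yh) powr (s - q)" "0 \<le> \<tau>" "\<tau> \<le> 1"
    and err: "L * N (xk - yh) powr (real p + \<nu> - q) * c \<le> cq \<beta> q * \<theta> * \<tau>"
  shows "(1 - \<theta> powr (q / (q - 1))) / q * (M * s * N (xk - yh) powr s)
    \<le> Dg 1 xk [u - xk] + lr u - lr xk + N (u - yh) powr q / (q * c)"
proof -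
  define d n P where "d = N (xk - yh)" and "n = N (u - xk)"
    and "P = taylor_model_deriv Dg p yh xk (u - xk)"
  define T where "T = \<theta> powr (q / (q - 1))"
  have n: "n \<ge> 0"
    unfolding n_def by (rule is_norm_nonneg[OF N])
  have first: "\<tau> / c * (d powr q / q + \<beta> / q * n powr q) \<le> P + lr u - lr xk + N (u - yh) powr q / (q * c)"
    using regularized_step_first_order[OF N hd pu _ lr xk u opt d c \<tau>] q unfolding d_def n_def P_def by simp
  have "\<bar>Dg 1 xk [u - xk] - P\<bar> \<le> L * d powr \<nu> * d ^ (p - 1) * n"
    using taylor_model_deriv_error[OF hd N p \<nu>] L unfolding d_def n_def P_def by simp
  also have "L * d powr \<nu> * d ^ (p - 1) * n = (L * d powr (real p + \<nu> - q) * c) * (d powr (q - 1) * n) / c"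
  proof -
    have "d ^ (p - 1) = d powr real (p - 1)"
      using d unfolding d_def by (simp add: powr_realpow)
    moreover have "\<nu> + real (p - 1) = (real p + \<nu> - q) + (q - 1)"
      using p by (simp add: of_nat_diff)
    ultimately have "d powr \<nu> * d ^ (p - 1) = d powr (real p + \<nu> - q) * d powr (q - 1)"
      by (metis powr_add)
    then show ?thesis
      using c by (simp add: field_simps)
  qed
  also have "\<dots> \<le> cq \<beta> q * \<theta> * \<tau> * (d powr (q - 1) * n) / c"
    using err c n by (intro divide_right_mono mult_right_mono) (auto simp: d_def)
  also have "\<dots> \<le> \<tau> / c * (\<beta> * n powr q / q + T * d powr q / q)"
  proof -
    have "cq \<beta> q * \<theta> * d powr (q - 1) * n \<le> \<beta> * n powr q / q + T * d powr q / q"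
      unfolding T_def using young_cq[OF \<beta> _ \<theta> _ n, of q d] q d unfolding d_def by simp
    then have "\<tau> / c * (cq \<beta> q * \<theta> * d powr (q - 1) * n) \<le> \<tau> / c * (\<beta> * n powr q / q + T * d powr q / q)"
      using \<tau>(2) c by (intro mult_left_mono) simp_all
    then show ?thesis
      by (simp add: field_simps)
  qed
  finally have error: "\<bar>Dg 1 xk [u - xk] - P\<bar> \<le> \<tau> / c * (\<beta> * n powr q / q + T * d powr q / q)" .
  have "\<tau> / c * d powr q = M * s * d powr s"
  proof -
    have "d powr (s - q) * d powr q = d powr s"
      using d unfolding d_def by (simp add: powr_add[symmetric])
    then show ?thesis
      unfolding \<tau>(1) d_def using c by simp
  qed
  then have "(1 - T) / q * (M * s * d powr s) = (1 - T) / q * (\<tau> / c * d powr q)"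
    by simp
  also have "\<dots> = \<tau> / c * (d powr q / q + \<beta> / q * n powr q) - \<tau> / c * (\<beta> * n powr q / q + T * d powr q / q)"
    using c q by (simp add: field_simps)
  finally have "(1 - T) / q * (M * s * d powr s)
      = \<tau> / c * (d powr q / q + \<beta> / q * n powr q) - \<tau> / c * (\<beta> * n powr q / q + T * d powr q / q)" .
  with first error show ?thesis
    unfolding T_def d_def by linarith
qed

lemma step_weight_eq_powr:
  fixes L la cqv \<theta> d \<alpha> r q :: real
  assumes L: "L > 0" and la: "la > 0" and c: "cqv > 0" and \<theta>: "\<theta> > 0" and d: "d > 0"
    and s: "s = \<alpha> * r + (1 - \<alpha>) * q" "s > 0"
  shows "cqv * la * (L powr \<alpha> / (cqv * la powr (1 - \<alpha>) * \<theta> powr \<alpha> * s)) * s * d powr (s - q)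
     = (L * la * d powr (r - q) / \<theta>) powr \<alpha>"
proof -
  have "ln (cqv * la * (L powr \<alpha> / (cqv * la powr (1 - \<alpha>) * \<theta> powr \<alpha> * s)) * s * d powr (s - q))
     = ln la + \<alpha> * ln L - (1 - \<alpha>) * ln la - \<alpha> * ln \<theta> + (s - q) * ln d"
    using assms by (simp add: ln_mult ln_div ln_powr)
  also have "\<dots> = \<alpha> * (ln L + ln la + (r - q) * ln d - ln \<theta>)"
    unfolding s by (simp add: algebra_simps)
  also have "\<dots> = ln ((L * la * d powr (r - q) / \<theta>) powr \<alpha>)"
    using assms by (simp add: ln_mult ln_div ln_powr)
  finally have "ln (cqv * la * (L powr \<alpha> / (cqv * la powr (1 - \<alpha>) * \<theta> powr \<alpha> * s)) * s * d powr (s - q))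
     = ln ((L * la * d powr (r - q) / \<theta>) powr \<alpha>)" .
  moreover have "0 < cqv * la * (L powr \<alpha> / (cqv * la powr (1 - \<alpha>) * \<theta> powr \<alpha> * s)) * s * d powr (s - q)"
    using assms by simp
  moreover have "0 < (L * la * d powr (r - q) / \<theta>) powr \<alpha>"
    using assms by simp
  ultimately show ?thesis
    by (metis ln_inj_iff)
qed

lemma regularized_step_gain:
  fixes N :: "'a::euclidean_space \<Rightarrow> real" and lr :: "'a \<Rightarrow> real"
  assumes N: "is_norm N" and hd: "holder_derivs N p \<nu> L Dg g" and p: "p \<ge> 1" and \<nu>: "0 \<le> \<nu>"
    and L: "L > 0" and pu: "unif_convex N q \<beta> (\<lambda>y. N y powr q / q)" and \<beta>: "\<beta> > 0"
    and q: "2 \<le> q" "q < real p + \<nu>" and \<alpha>: "0 \<le> \<alpha>" "\<alpha> \<le> 1" and \<theta>: "0 < \<theta>" and la: "la > 0"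
    and s: "s = \<alpha> * (real p + \<nu>) + (1 - \<alpha>) * q"
    and M: "M = L powr \<alpha> / (cq \<beta> q * la powr (1 - \<alpha>) * \<theta> powr \<alpha> * s)"
    and lr: "convex_on D lr" and xk: "xk \<in> D" and u: "u \<in> D"
    and opt: "\<And>y. y \<in> D \<Longrightarrow> taylor_model Dg p yh xk + M * N (xk - yh) powr s + lr xk
                 \<le> taylor_model Dg p yh y + M * N (y - yh) powr s + lr y"
    and \<omega>: "L * la * N (xk - yh) powr (real p + \<nu> - q) \<le> \<theta>"
  shows "(1 - \<theta> powr (q / (q - 1))) / q * (M * s * N (xk - yh) powr s)
     \<le> Dg 1 xk [u - xk] + lr u - lr xk + N (u - yh) powr q / (q * (cq \<beta> q * la))"
proof -
  have cq: "cq \<beta> q > 0"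
    unfolding cq_def using \<beta> q by simp
  have "s - q = \<alpha> * (real p + \<nu> - q)"
    unfolding s by (simp add: algebra_simps)
  then have sq: "q \<le> s"
    using \<alpha> q by (smt (verit) mult_nonneg_nonneg)
  then have M0: "M > 0"
    unfolding M using L cq la \<theta> q by simp
  have c: "cq \<beta> q * la > 0"
    using cq la by simp
  show ?thesis
  proof (cases "N (xk - yh) = 0")
    case True
    then have "xk = yh"
      using is_norm_eq_0_iff[OF N] by simp
    then have "0 \<le> Dg 1 xk [u - xk] + lr u - lr xk"
      using regularized_step_first_order_degenerate[OF N hd lr xk u, of M s] opt M0 sq q
        taylor_model_deriv_error[OF hd N p \<nu>, of xk "u - xk" xk] L
      by (simp add: is_norm_zero[OF N])
    moreover have "0 \<le> N (u - yh) powr q / (q * (cq \<beta> q * la))"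
      using c q by simp
    ultimately show ?thesis
      using True sq q by simp
  next
    case False
    then have d: "N (xk - yh) > 0"
      using is_norm_nonneg[OF N, of "xk - yh"] by simp
    define \<omega> where "\<omega> = L * la * N (xk - yh) powr (real p + \<nu> - q)"
    define \<tau> where "\<tau> = cq \<beta> q * la * M * s * N (xk - yh) powr (s - q)"
    have \<omega>0: "0 \<le> \<omega>"
      unfolding \<omega>_def using L la by simp
    have \<tau>_eq: "\<tau> = (\<omega> / \<theta>) powr \<alpha>"
      unfolding \<tau>_def \<omega>_def M using step_weight_eq_powr[OF L la cq \<theta> d s] sq q by simp
    have ratio: "0 \<le> \<omega> / \<theta>" "\<omega> / \<theta> \<le> 1"
      using \<omega>0 \<omega> \<theta> unfolding \<omega>_def by auto
    then have "\<tau> \<le> 1"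
      unfolding \<tau>_eq using \<alpha> by (intro powr_le1) auto
    moreover have "\<omega> \<le> \<theta> * \<tau>"
    proof -
      have "(\<omega> / \<theta>) powr 1 \<le> (\<omega> / \<theta>) powr \<alpha>"
        using ratio \<alpha> by (intro powr_mono') auto
      then show ?thesis
        unfolding \<tau>_eq using ratio \<theta> by (simp add: field_simps)
    qed
    then have "L * N (xk - yh) powr (real p + \<nu> - q) * (cq \<beta> q * la) \<le> cq \<beta> q * \<theta> * \<tau>"
      using cq unfolding \<omega>_def by (simp add: algebra_simps)
    moreover have "0 \<le> \<tau>"
      unfolding \<tau>_eq by simp
    ultimately show ?thesis
      using regularized_step_gain_pos[OF N hd p \<nu> L pu \<beta> q(1) lr xk u opt d c _ _ _ _, of \<theta> \<tau>] \<theta>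
      unfolding \<tau>_def by (simp add: mult.assoc)
  qed
qed

section \<open>Estimate sequences\<close>

definition estimate_fun ::
  "('a::real_vector \<Rightarrow> 'a \<Rightarrow> real) \<Rightarrow> ('a \<Rightarrow> real) \<Rightarrow> ('a \<Rightarrow> real) \<Rightarrow> (nat \<Rightarrow> real) \<Rightarrow> (nat \<Rightarrow> 'a) \<Rightarrow> nat \<Rightarrow> 'a \<Rightarrow> real"
  where "estimate_fun G g lr a x k y = (\<Sum>j=1..k. a j * (g (x j) + G (x j) (y - x j) + lr y))"

lemma convex_on_estimate_fun:
  assumes lr: "convex_on D lr" and G: "\<And>u. linear (G u)" and a: "\<And>j. j \<ge> 1 \<Longrightarrow> a j \<ge> 0"
  shows "convex_on D (estimate_fun G g lr a x k)"
proof (rule convex_onI)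
  fix t :: real and y1 y2
  assume t: "0 < t" "t < 1" and y: "y1 \<in> D" "y2 \<in> D"
  let ?y = "(1 - t) *\<^sub>R y1 + t *\<^sub>R y2"
  have "a j * (g (x j) + G (x j) (?y - x j) + lr ?y)
      \<le> (1 - t) * (a j * (g (x j) + G (x j) (y1 - x j) + lr y1)) + t * (a j * (g (x j) + G (x j) (y2 - x j) + lr y2))"
    if "j \<in> {1..k}" for j
  proof -
    have "?y - x j = (1 - t) *\<^sub>R (y1 - x j) + t *\<^sub>R (y2 - x j)"
      by (simp add: algebra_simps)
    then have "G (x j) (?y - x j) = (1 - t) * G (x j) (y1 - x j) + t * G (x j) (y2 - x j)"
      by (simp add: linear_add[OF G] linear_cmul[OF G])
    moreover have "lr ?y \<le> (1 - t) * lr y1 + t * lr y2"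
      using convex_onD[OF lr] t y by simp
    moreover have "(1 - t) * (g (x j) + G (x j) (y1 - x j) + lr y1) + t * (g (x j) + G (x j) (y2 - x j) + lr y2)
        = g (x j) + ((1 - t) * G (x j) (y1 - x j) + t * G (x j) (y2 - x j)) + ((1 - t) * lr y1 + t * lr y2)"
      by (simp add: algebra_simps)
    ultimately have "g (x j) + G (x j) (?y - x j) + lr ?y
        \<le> (1 - t) * (g (x j) + G (x j) (y1 - x j) + lr y1) + t * (g (x j) + G (x j) (y2 - x j) + lr y2)"
      by linarith
    then have "a j * (g (x j) + G (x j) (?y - x j) + lr ?y)
        \<le> a j * ((1 - t) * (g (x j) + G (x j) (y1 - x j) + lr y1) + t * (g (x j) + G (x j) (y2 - x j) + lr y2))"
      using a[of j] that by (intro mult_left_mono) auto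
    then show ?thesis
      by (simp add: algebra_simps)
  qed
  then have "estimate_fun G g lr a x k ?y \<le> (\<Sum>j=1..k. (1 - t) * (a j * (g (x j) + G (x j) (y1 - x j) + lr y1))
      + t * (a j * (g (x j) + G (x j) (y2 - x j) + lr y2)))"
    unfolding estimate_fun_def by (intro sum_mono) blast
  also have "\<dots> = (1 - t) * estimate_fun G g lr a x k y1 + t * estimate_fun G g lr a x k y2"
    unfolding estimate_fun_def by (simp add: sum.distrib sum_distrib_left)
  finally show "estimate_fun G g lr a x k ?y
      \<le> (1 - t) * estimate_fun G g lr a x k y1 + t * estimate_fun G g lr a x k y2" .
qed (rule convex_on_imp_convex[OF lr])

lemma accA_scaled_powr_eq:
  fixes A a \<gamma> q X :: real
  assumes A: "A > 0" and a: "a > 0" and \<gamma>: "\<gamma> > 0" and q: "q > 0" and X: "X \<ge> 0"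
  shows "A * (((a / A) * X) powr q / (q * (a powr q / (\<gamma> * A powr (q - 1))))) = \<gamma> / q * X powr q"
proof -
  have "A powr q = A * A powr (q - 1)"
    using powr_add[of A 1 "q - 1"] A by simp
  then show ?thesis
    using assms by (simp add: powr_mult powr_divide field_simps)
qed

context
  fixes N :: "'a::euclidean_space \<Rightarrow> real" and q \<gamma> :: real and h lr g :: "'a \<Rightarrow> real"
    and G :: "'a \<Rightarrow> 'a \<Rightarrow> real" and a gain :: "nat \<Rightarrow> real" and x z :: "nat \<Rightarrow> 'a" and D :: "'a set"
  assumes N: "is_norm N" and q: "q > 0" and \<gamma>: "\<gamma> > 0"
    and h: "convex_on UNIV h" "unif_convex N q \<gamma> h" "\<And>y. 0 \<le> h y"
    and lr: "convex_on D lr" and G: "\<And>u. linear (G u)" and grad: "\<And>u y. g u + G u (y - u) \<le> g y"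
    and a: "\<And>i. i \<ge> 1 \<Longrightarrow> a i > 0" and xD: "\<And>i. x i \<in> D" and zD: "\<And>i. z i \<in> D"
    and z_min: "\<And>i y. y \<in> D \<Longrightarrow> estimate_fun G g lr a x i (z i) + h (z i) \<le> estimate_fun G g lr a x i y + h y"
    and step: "\<And>k u. k \<ge> 1 \<Longrightarrow> u \<in> D \<Longrightarrow> gain k \<le> G (x k) (u - x k) + lr u - lr (x k)
       + N (u - xhat a x z (k - 1)) powr q / (q * (a k powr q / (\<gamma> * accA a k powr (q - 1))))"
begin

lemma estimate_sequence_invariant:
  "accA a k * (g (x k) + lr (x k)) + (\<Sum>i=1..k. accA a i * gain i)
    \<le> estimate_fun G g lr a x k (z k) + h (z k)"
proof (induction k)
  case 0
  show ?case
    using h(3) by (simp add: accA_def estimate_fun_def)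
next
  case (Suc j)
  define k A \<Psi> where "k = Suc j" and "A = accA a" and "\<Psi> = estimate_fun G g lr a x"
  define y t where "y = z k" and "t = a k / A k"
  define u where "u = (1 - t) *\<^sub>R x j + t *\<^sub>R y"
  have Ak: "A k = A j + a k"
    unfolding A_def accA_def k_def by simp
  have ak: "a k > 0"
    unfolding k_def using a by simp
  have Aj: "A j \<ge> 0"
    unfolding A_def accA_def using a by (intro sum_nonneg) (auto intro: less_imp_le)
  have A_t: "A k * (1 - t) = A j" "A k * t = a k"
    unfolding t_def using Ak ak Aj by (simp_all add: field_simps)
  have t: "0 \<le> t" "t \<le> 1"
    unfolding t_def using Ak ak Aj by auto
  have "u \<in> D"
    unfolding u_def using convexD_alt[OF convex_on_imp_convex[OF lr] xD zD] t y_def by simp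
  have "A k * lr u \<le> A k * ((1 - t) * lr (x j) + t * lr y)"
    unfolding u_def y_def using convex_onD[OF lr t xD zD] Ak ak Aj by (intro mult_left_mono) auto
  also have "\<dots> = (A k * (1 - t)) * lr (x j) + (A k * t) * lr y"
    by (simp add: algebra_simps)
  finally have lr_u: "A k * lr u \<le> A j * lr (x j) + a k * lr y"
    unfolding A_t .
  have G_u: "A k * G (x k) (u - x k) = A j * G (x k) (x j - x k) + a k * G (x k) (y - x k)"
  proof -
    have "u - x k = (1 - t) *\<^sub>R (x j - x k) + t *\<^sub>R (y - x k)"
      unfolding u_def by (simp add: algebra_simps)
    then have "A k * G (x k) (u - x k) = A k * ((1 - t) * G (x k) (x j - x k) + t * G (x k) (y - x k))"
      by (simp add: linear_add[OF G] linear_cmul[OF G])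
    also have "\<dots> = (A k * (1 - t)) * G (x k) (x j - x k) + (A k * t) * G (x k) (y - x k)"
      by (simp add: algebra_simps)
    finally show ?thesis
      unfolding A_t .
  qed
  have ratio: "A j / A k = 1 - t"
    using A_t(1) Ak ak Aj by (simp add: field_simps)
  have "xhat a x z j = t *\<^sub>R z j + (A j / A k) *\<^sub>R x j"
    unfolding xhat_def t_def A_def k_def by simp
  then have "u - xhat a x z j = t *\<^sub>R (y - z j)"
    unfolding u_def ratio by (simp add: algebra_simps)
  then have "A k * (N (u - xhat a x z j) powr q / (q * (a k powr q / (\<gamma> * A k powr (q - 1)))))
      = \<gamma> / q * N (y - z j) powr q"
    unfolding t_def using accA_scaled_powr_eq[of "A k" "a k" \<gamma> q "N (y - z j)"] Ak ak Aj \<gamma> q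
    by (simp add: is_norm_scaleR[OF N] is_norm_nonneg[OF N])
  then have step_k: "A k * gain k \<le> A k * G (x k) (u - x k) + A k * lr u - A k * lr (x k) + \<gamma> / q * N (y - z j) powr q"
    using mult_left_mono[OF step[OF _ \<open>u \<in> D\<close>, of k], of "A k"] Ak ak Aj
    unfolding A_def k_def by (simp add: algebra_simps)
  have "\<Psi> j (z j) + h (z j) + \<gamma> / q * N (y - z j) powr q \<le> \<Psi> j y + h y"
    unfolding \<Psi>_def y_def using unif_convex_minimizer_growth[OF N h(1,2) convex_on_estimate_fun[OF lr G] zD z_min zD] a
    by (simp add: less_imp_le)
  moreover have "\<Psi> k y = \<Psi> j y + a k * (g (x k) + G (x k) (y - x k) + lr y)"
    unfolding \<Psi>_def estimate_fun_def k_def by simp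
  moreover have "A j * g (x k) + A j * G (x k) (x j - x k) \<le> A j * g (x j)"
    using mult_left_mono[OF grad[of "x k" "x j"] Aj] by (simp add: algebra_simps)
  moreover have "A k * (g (x k) + lr (x k)) = A j * g (x k) + a k * g (x k) + A k * lr (x k)"
    using Ak by (simp add: algebra_simps)
  moreover have "A j * (g (x j) + lr (x j)) = A j * g (x j) + A j * lr (x j)"
    by (simp add: algebra_simps)
  moreover have "(\<Sum>i=1..k. A i * gain i) = (\<Sum>i=1..j. A i * gain i) + A k * gain k"
    unfolding k_def by simp
  ultimately show ?case
    using Suc.IH step_k lr_u G_u unfolding \<Psi>_def A_def k_def y_def by (simp add: algebra_simps)
qed

lemma estimate_sequence_bound:
  assumes xs: "xs \<in> D" "\<And>y. y \<in> D \<Longrightarrow> g xs + lr xs \<le> g y + lr y"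
  shows "(\<Sum>i=1..k. accA a i * gain i) \<le> h xs"
proof -
  have "estimate_fun G g lr a x k xs \<le> (\<Sum>j=1..k. a j * (g xs + lr xs))"
    unfolding estimate_fun_def using grad a by (intro sum_mono mult_left_mono) (auto intro: less_imp_le)
  also have "\<dots> = accA a k * (g xs + lr xs)"
    unfolding accA_def by (simp add: sum_distrib_right)
  also have "\<dots> \<le> accA a k * (g (x k) + lr (x k))"
    using xs xD a unfolding accA_def by (intro mult_left_mono sum_nonneg) (auto intro: less_imp_le)
  finally show ?thesis
    using estimate_sequence_invariant[of k] z_min[OF xs(1), of k] by linarith
qed

end

lemma tensor_summand_eq:
  fixes L a A c \<gamma> \<theta> d \<alpha> r q T :: real
  assumes L: "L > 0" and a: "a > 0" and A: "A > 0" and c: "c > 0" and \<gamma>: "\<gamma> > 0" and \<theta>: "\<theta> > 0"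
    and d: "d \<ge> 0" and q: "0 < q" "q < r" and \<alpha>: "0 \<le> \<alpha>" "\<alpha> \<le> 1" and T: "T < 1"
  defines "la \<equiv> a powr q / (c * \<gamma> * A powr (q - 1))" and "s \<equiv> \<alpha> * r + (1 - \<alpha>) * q"
  shows "(L * la * d powr (r - q)) powr (s / (r - q)) * (A powr (r - 1) / a powr r) powr (q / (r - q))
    = q * \<theta> powr \<alpha> * inverse (1 - T) * \<gamma> powr (- r / (r - q)) * (L / c) powr (q / (r - q))
      * (A * ((1 - T) / q * (L powr \<alpha> / (c * la powr (1 - \<alpha>) * \<theta> powr \<alpha> * s) * s * d powr s)))"
proof -
  define e where "e = r - q"
  have e: "e > 0"
    unfolding e_def using q by simp
  have la: "la > 0"
    unfolding la_def using a A c \<gamma> by simp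
  have s: "s > 0"
    unfolding s_def using q \<alpha> by (smt (verit) mult_nonneg_nonneg mult_pos_pos)
  have base: "(L * la * d powr e) powr (s / e) * (A powr (r - 1) / a powr r) powr (q / e)
      = (L / c) powr (q / e) * \<gamma> powr (- r / e) * (A * (L powr \<alpha> / (c * la powr (1 - \<alpha>))) * d powr s)"
  proof (cases "d = 0")
    case False
    then have d: "d > 0"
      using d by simp
    define X Y R where "X = ln L + ln la + e * ln d" and "Y = (r - 1) * ln A - r * ln a"
      and "R = ln A + \<alpha> * ln L - ln c - (1 - \<alpha>) * ln la + s * ln d"
    have lla: "ln la = q * ln a - ln c - ln \<gamma> - (q - 1) * ln A"
      unfolding la_def using a A c \<gamma> by (simp add: ln_div ln_mult ln_powr)
    have num: "s * X + q * Y = q * (ln L - ln c) - r * ln \<gamma> + e * R"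
      unfolding X_def Y_def R_def lla s_def e_def by algebra
    have "ln ((L * la * d powr e) powr (s / e) * (A powr (r - 1) / a powr r) powr (q / e)) = s / e * X + q / e * Y"
      unfolding X_def Y_def using L la d A a by (simp add: ln_div ln_mult ln_powr)
    also have "\<dots> = (s * X + q * Y) / e"
      by (simp add: add_divide_distrib)
    also have "\<dots> = q / e * (ln L - ln c) + (- r / e) * ln \<gamma> + R"
      unfolding num using e by (simp add: add_divide_distrib diff_divide_distrib)
    also have "\<dots> = ln ((L / c) powr (q / e) * \<gamma> powr (- r / e) * (A * (L powr \<alpha> / (c * la powr (1 - \<alpha>))) * d powr s))"
      unfolding R_def using L la d A c \<gamma> by (simp add: ln_div ln_mult ln_powr)
    finally have "ln ((L * la * d powr e) powr (s / e) * (A powr (r - 1) / a powr r) powr (q / e))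
      = ln ((L / c) powr (q / e) * \<gamma> powr (- r / e) * (A * (L powr \<alpha> / (c * la powr (1 - \<alpha>))) * d powr s))" .
    moreover have "0 < (L * la * d powr e) powr (s / e) * (A powr (r - 1) / a powr r) powr (q / e)"
      using L la d A a by simp
    moreover have "0 < (L / c) powr (q / e) * \<gamma> powr (- r / e) * (A * (L powr \<alpha> / (c * la powr (1 - \<alpha>))) * d powr s)"
      using L la d A c \<gamma> by simp
    ultimately show ?thesis
      by (metis ln_inj_iff)
  qed (use e s in simp)
  have W: "L powr \<alpha> / (c * la powr (1 - \<alpha>) * \<theta> powr \<alpha> * s) * s * d powr s
      = (L powr \<alpha> / (c * la powr (1 - \<alpha>)) * d powr s) / \<theta> powr \<alpha>"
    using s by simp
  have cancel: "q * \<theta>' * inverse (1 - T) * G1 * G2 * (A * ((1 - T) / q * (Z / \<theta>'))) = G1 * G2 * (A * Z)"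
    if "\<theta>' \<noteq> 0" for \<theta>' G1 G2 Z
    using that T q by (simp add: field_simps)
  have \<theta>\<alpha>: "\<theta> powr \<alpha> \<noteq> 0"
    using \<theta> by simp
  show ?thesis
    unfolding e_def[symmetric] W cancel[OF \<theta>\<alpha>] base by (simp add: mult_ac)
qed

lemma proper_closed_convex_dom:
  assumes "proper_closed_convex l"
  shows "convex_on {y. l y \<noteq> \<infinity>} (\<lambda>y. real_of_ereal (l y))"
proof -
  have finite: "\<And>z. l z \<noteq> -\<infinity>" and epi: "convex {(x, t::real). l x \<le> ereal t}"
    using assms unfolding proper_closed_convex_def by blast+
  have comb: "l ((1 - t) *\<^sub>R x + t *\<^sub>R y) \<le> ereal ((1 - t) * real_of_ereal (l x) + t * real_of_ereal (l y))"
    if "l x \<noteq> \<infinity>" "l y \<noteq> \<infinity>" "0 \<le> t" "t \<le> 1" for x y t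
  proof -
    have "(x, real_of_ereal (l x)) \<in> {(x, t::real). l x \<le> ereal t}"
      "(y, real_of_ereal (l y)) \<in> {(x, t::real). l x \<le> ereal t}"
      using that finite[of x] finite[of y] by (auto simp: ereal_real)
    from convexD_alt[OF epi this that(3,4)] show ?thesis
      by simp
  qed
  have dom: "l ((1 - t) *\<^sub>R x + t *\<^sub>R y) \<noteq> \<infinity>"
    if "l x \<noteq> \<infinity>" "l y \<noteq> \<infinity>" "0 \<le> t" "t \<le> 1" for x y t
    using comb[OF that] by auto
  show ?thesis
  proof (rule convex_onI)
    show "convex {y. l y \<noteq> \<infinity>}"
      unfolding convex_alt using dom by blast
    fix t :: real and x y
    assume "0 < t" "t < 1" "x \<in> {y. l y \<noteq> \<infinity>}" "y \<in> {y. l y \<noteq> \<infinity>}"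
    then show "real_of_ereal (l ((1 - t) *\<^sub>R x + t *\<^sub>R y)) \<le> (1 - t) * real_of_ereal (l x) + t * real_of_ereal (l y)"
      using comb[of x y t] finite[of "(1 - t) *\<^sub>R x + t *\<^sub>R y"]
      by (cases "l ((1 - t) *\<^sub>R x + t *\<^sub>R y)") auto
  qed
qed

lemma ereal_argmin_dom:
  fixes l :: "'a \<Rightarrow> ereal"
  assumes l: "\<And>y. l y \<noteq> -\<infinity>" and y0: "l y0 \<noteq> \<infinity>"
    and min: "\<And>y. ereal (F x) + l x \<le> ereal (F y) + l y"
  shows "l x \<noteq> \<infinity>" "\<And>y. l y \<noteq> \<infinity> \<Longrightarrow> F x + real_of_ereal (l x) \<le> F y + real_of_ereal (l y)"
proof -
  show x: "l x \<noteq> \<infinity>"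
    using min[of y0] y0 l[of y0] by (cases "l y0") auto
  show "F x + real_of_ereal (l x) \<le> F y + real_of_ereal (l y)" if "l y \<noteq> \<infinity>" for y
    using min[of y] x that l[of x] l[of y] by (cases "l x"; cases "l y") auto
qed

lemma ereal_weighted_argmin_dom:
  fixes l :: "'a \<Rightarrow> ereal"
  assumes l: "\<And>y. l y \<noteq> -\<infinity>" and y0: "l y0 \<noteq> \<infinity>"
    and J: "finite J" "J \<noteq> {}" and a: "\<And>j. j \<in> J \<Longrightarrow> a j > 0"
    and min: "\<And>y. (\<Sum>j\<in>J. ereal (a j) * (ereal (c j z) + l z)) + ereal (h z)
      \<le> (\<Sum>j\<in>J. ereal (a j) * (ereal (c j y) + l y)) + ereal (h y)"
  shows "l z \<noteq> \<infinity>"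
    "\<And>y. l y \<noteq> \<infinity> \<Longrightarrow> (\<Sum>j\<in>J. a j * (c j z + real_of_ereal (l z))) + h z
      \<le> (\<Sum>j\<in>J. a j * (c j y + real_of_ereal (l y))) + h y"
proof -
  have finite_sum: "(\<Sum>j\<in>J. ereal (a j) * (ereal (c j y) + l y)) = ereal (\<Sum>j\<in>J. a j * (c j y + real_of_ereal (l y)))"
    if "l y \<noteq> \<infinity>" for y
    using that l[of y] by (cases "l y") auto
  show z: "l z \<noteq> \<infinity>"
  proof
    assume "l z = \<infinity>"
    moreover obtain j where "j \<in> J"
      using J by blast
    ultimately have "(\<Sum>j\<in>J. ereal (a j) * (ereal (c j z) + l z)) = \<infinity>"
      using J a by (subst sum_Pinfty) auto
    then show False
      using min[of y0] finite_sum[OF y0] by simp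
  qed
  show "(\<Sum>j\<in>J. a j * (c j z + real_of_ereal (l z))) + h z \<le> (\<Sum>j\<in>J. a j * (c j y + real_of_ereal (l y))) + h y"
    if "l y \<noteq> \<infinity>" for y
    using min[of y] finite_sum[OF z] finite_sum[OF that] by simp
qed

lemma cq_mul_lam:
  assumes "\<beta> > 0" "q > 1"
  shows "cq \<beta> q * lam q \<gamma> \<beta> a i = a i powr q / (\<gamma> * accA a i powr (q - 1))"
  using assms unfolding lam_def cq_def by simp

lemma accA_pos:
  assumes "\<And>i. i \<ge> 1 \<Longrightarrow> a i > 0" "i \<ge> 1"
  shows "accA a i > 0"
  unfolding accA_def using assms by (intro sum_pos) auto

lemma tensor_summands_sum_le:
  fixes a d :: "nat \<Rightarrow> real" and L \<beta> \<gamma> \<theta> \<alpha> \<nu> q :: real and p :: nat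
  assumes L: "L > 0" and \<beta>: "\<beta> > 0" and \<gamma>: "\<gamma> > 0" and \<theta>: "0 < \<theta>" "\<theta> < 1"
    and q: "2 \<le> q" "q < real p + \<nu>" and \<alpha>: "0 \<le> \<alpha>" "\<alpha> \<le> 1"
    and a: "\<And>i. i \<ge> 1 \<Longrightarrow> a i > 0" and d: "\<And>i. d i \<ge> 0"
    and bound: "(\<Sum>i=1..k. accA a i * ((1 - \<theta> powr (q / (q - 1))) / q
      * (L powr \<alpha> / (cq \<beta> q * lam q \<gamma> \<beta> a i powr (1 - \<alpha>) * \<theta> powr \<alpha> * varsigma \<alpha> p \<nu> q)
        * varsigma \<alpha> p \<nu> q * d i powr varsigma \<alpha> p \<nu> q))) \<le> H"
  defines "T \<equiv> \<theta> powr (q / (q - 1))"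
  shows "(\<Sum>i=1..k. (L * lam q \<gamma> \<beta> a i * d i powr (real p + \<nu> - q)) powr (varsigma \<alpha> p \<nu> q / (real p + \<nu> - q))
      * (accA a i powr (real p + \<nu> - 1) / (accA a i - accA a (i - 1)) powr (real p + \<nu>)) powr (q / (real p + \<nu> - q)))
    \<le> q * \<theta> powr \<alpha> * inverse (1 - T) * \<gamma> powr (- (real p + \<nu>) / (real p + \<nu> - q))
      * (L / cq \<beta> q) powr (q / (real p + \<nu> - q)) * H"
proof -
  have "T < 1"
    unfolding T_def using powr_less_mono2[of "q / (q - 1)" \<theta> 1] \<theta> q by simp
  define K where "K = q * \<theta> powr \<alpha> * inverse (1 - T) * \<gamma> powr (- (real p + \<nu>) / (real p + \<nu> - q))
      * (L / cq \<beta> q) powr (q / (real p + \<nu> - q))"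
  have "accA a i - accA a (i - 1) = a i" if "i \<ge> 1" for i
    using that unfolding accA_def by (cases i) auto
  then have "(\<Sum>i=1..k. (L * lam q \<gamma> \<beta> a i * d i powr (real p + \<nu> - q)) powr (varsigma \<alpha> p \<nu> q / (real p + \<nu> - q))
      * (accA a i powr (real p + \<nu> - 1) / (accA a i - accA a (i - 1)) powr (real p + \<nu>)) powr (q / (real p + \<nu> - q)))
    = K * (\<Sum>i=1..k. accA a i * ((1 - T) / q * (L powr \<alpha> / (cq \<beta> q * lam q \<gamma> \<beta> a i powr (1 - \<alpha>) * \<theta> powr \<alpha> * varsigma \<alpha> p \<nu> q)
        * varsigma \<alpha> p \<nu> q * d i powr varsigma \<alpha> p \<nu> q)))"
    using tensor_summand_eq[OF L a accA_pos[of a, OF a] _ \<gamma> \<theta>(1) d _ q(2) \<alpha> \<open>T < 1\<close>] \<beta> q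
    unfolding K_def sum_distrib_left varsigma_def lam_def cq_def by (intro sum.cong) simp_all
  also have "\<dots> \<le> K * H"
    using bound \<open>T < 1\<close> \<theta> q L \<beta> \<gamma> unfolding K_def T_def cq_def by (intro mult_left_mono) auto
  finally show ?thesis
    unfolding K_def .
qed

lemma ereal_iterates_dom:
  fixes l :: "'a::real_vector \<Rightarrow> ereal"
  assumes l: "\<And>y. l y \<noteq> -\<infinity>" and x0: "l x0 \<noteq> \<infinity>" and init: "x 0 = x0" "z 0 = x0"
    and h: "\<And>y. 0 \<le> h y" "h x0 = 0" and a: "\<And>i. i \<ge> 1 \<Longrightarrow> a i > 0"
    and x_min: "\<And>i y. i \<ge> 1 \<Longrightarrow> ereal (F i (x i)) + l (x i) \<le> ereal (F i y) + l y"
    and z_min: "\<And>i y. i \<ge> 1 \<Longrightarrow>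
       (\<Sum>j=1..i. ereal (a j) * (ereal (g (x j) + G (x j) (z i - x j)) + l (z i))) + ereal (h (z i))
       \<le> (\<Sum>j=1..i. ereal (a j) * (ereal (g (x j) + G (x j) (y - x j)) + l y)) + ereal (h y)"
    and D: "D = {y. l y \<noteq> \<infinity>}" and lr: "\<And>y. lr y = real_of_ereal (l y)"
  shows "x i \<in> D" and "z i \<in> D"
    and "i \<ge> 1 \<Longrightarrow> y \<in> D \<Longrightarrow> F i (x i) + lr (x i) \<le> F i y + lr y"
    and "y \<in> D \<Longrightarrow> estimate_fun G g lr a x i (z i) + h (z i) \<le> estimate_fun G g lr a x i y + h y"
proof -
  show "x i \<in> D"
  proof (cases "i = 0")
    case False
    then have "i \<ge> 1"
      by simp
    from ereal_argmin_dom(1)[OF l x0 x_min[OF this]] show ?thesis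
      unfolding D by simp
  qed (use x0 init D in simp)
  show "i \<ge> 1 \<Longrightarrow> y \<in> D \<Longrightarrow> F i (x i) + lr (x i) \<le> F i y + lr y"
    using ereal_argmin_dom(2)[OF l x0 x_min] unfolding D lr by simp
  have "z i \<in> D \<and> (\<forall>y\<in>D. estimate_fun G g lr a x i (z i) + h (z i) \<le> estimate_fun G g lr a x i y + h y)"
  proof (cases "i = 0")
    case False
    then have "i \<ge> 1"
      by simp
    from ereal_weighted_argmin_dom[OF l x0 _ _ _ z_min[OF this]] False a show ?thesis
      unfolding D lr estimate_fun_def by (auto simp: add.assoc)
  qed (use x0 init h in \<open>auto simp: D estimate_fun_def\<close>)
  then show "z i \<in> D" and "y \<in> D \<Longrightarrow> estimate_fun G g lr a x i (z i) + h (z i) \<le> estimate_fun G g lr a x i y + h y"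
    by blast+
qed

lemma lam_pos:
  assumes "\<beta> > 0" "\<gamma> > 0" "q > 1" "\<And>i. i \<ge> 1 \<Longrightarrow> a i > 0" "i \<ge> 1"
  shows "lam q \<gamma> \<beta> a i > 0"
  unfolding lam_def cq_def using assms(1-3) assms(4)[OF assms(5)] accA_pos[of a i, OF assms(4,5)] by simp

lemma convex_on_has_derivative_ge:
  fixes g :: "'a::real_normed_vector \<Rightarrow> real"
  assumes g: "convex_on UNIV g" and G: "(g has_derivative G) (at x)"
  shows "g x + G (y - x) \<le> g y"
proof -
  define \<phi> where "\<phi> t = g (x + t *\<^sub>R (y - x))" for t :: real
  have "convex_on UNIV \<phi>"
  proof (rule convex_onI)
    fix t a b :: real
    assume "0 < t" "t < 1"
    moreover have "x + ((1 - t) * a + t * b) *\<^sub>R (y - x) = (1 - t) *\<^sub>R (x + a *\<^sub>R (y - x)) + t *\<^sub>R (x + b *\<^sub>R (y - x))"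
      by (simp add: algebra_simps)
    ultimately show "\<phi> ((1 - t) *\<^sub>R a + t *\<^sub>R b) \<le> (1 - t) * \<phi> a + t * \<phi> b"
      unfolding \<phi>_def using convex_onD[OF g, of t "x + a *\<^sub>R (y - x)" "x + b *\<^sub>R (y - x)"] by simp
  qed auto
  moreover have "(\<phi> has_real_derivative G (y - x)) (at 0 within UNIV)"
    unfolding \<phi>_def using has_real_derivative_along_line[of g G x 0 "y - x"] G by simp
  ultimately have "G (y - x) * (1 - 0) \<le> \<phi> 1 - \<phi> 0"
    using convex_on_imp_above_tangent[of UNIV \<phi> 0 1 "G (y - x)"] by simp
  then show ?thesis
    unfolding \<phi>_def by simp
qed

theorem mainTheorem11:
  fixes N :: "'a::euclidean_space \<Rightarrow> real"
    and g :: "'a \<Rightarrow> real" and l :: "'a \<Rightarrow> ereal"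
    and Dg :: "nat \<Rightarrow> 'a \<Rightarrow> 'a list \<Rightarrow> real"
    and h :: "'a \<Rightarrow> real"
    and p :: nat and \<nu> L q \<beta> \<gamma> \<alpha> \<theta>2 :: real
    and a :: "nat \<Rightarrow> real" and x z :: "nat \<Rightarrow> 'a" and x0 xs :: 'a
  assumes norm: "is_norm N"
    and p: "p \<ge> 1" and nu: "0 \<le> \<nu>" "\<nu> \<le> 1" and L: "L > 0"
    and g_convex: "convex_on UNIV g"
    and g_holder: "holder_derivs N p \<nu> L Dg g"
    and l_pcc: "proper_closed_convex l"
    and xs_min: "\<And>y. ereal (g xs) + l xs \<le> ereal (g y) + l y"
    and beta: "\<beta> > 0" and gamma: "\<gamma> > 0"
    and pow_uc: "unif_convex N q \<beta> (\<lambda>y. N y powr q / q)"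
    and x0: "l x0 \<noteq> \<infinity>"
    and h_convex: "convex_on UNIV h"
    and h_nonneg: "\<And>y. h y \<ge> 0"
    and h_zero: "\<And>y. h y = 0 \<longleftrightarrow> y = x0"
    and h_uc: "unif_convex N q \<gamma> h"
    and alpha: "0 \<le> \<alpha>" "\<alpha> \<le> 1"
    and a_pos: "\<And>i. i \<ge> 1 \<Longrightarrow> a i > 0"
    and q: "2 \<le> q" "q < real p + \<nu>"
    and theta: "0 < \<theta>2" "\<theta>2 < 1"
    and x_init: "x 0 = x0" and z_init: "z 0 = x0"
    and x_min: "\<And>i y. i \<ge> 1 \<Longrightarrow>
       ereal (taylor_model Dg p (xhat a x z (i - 1)) (x i)
         + L powr \<alpha> / (cq \<beta> q * lam q \<gamma> \<beta> a i powr (1 - \<alpha>) * \<theta>2 powr \<alpha> * varsigma \<alpha> p \<nu> q)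
           * N (x i - xhat a x z (i - 1)) powr varsigma \<alpha> p \<nu> q) + l (x i)
       \<le> ereal (taylor_model Dg p (xhat a x z (i - 1)) y
         + L powr \<alpha> / (cq \<beta> q * lam q \<gamma> \<beta> a i powr (1 - \<alpha>) * \<theta>2 powr \<alpha> * varsigma \<alpha> p \<nu> q)
           * N (y - xhat a x z (i - 1)) powr varsigma \<alpha> p \<nu> q) + l y"
    and z_min: "\<And>i y. i \<ge> 1 \<Longrightarrow>
       (\<Sum>j=1..i. ereal (a j) * (ereal (g (x j) + Dg 1 (x j) [z i - x j]) + l (z i))) + ereal (h (z i))
       \<le> (\<Sum>j=1..i. ereal (a j) * (ereal (g (x j) + Dg 1 (x j) [y - x j]) + l y)) + ereal (h y)"
    and omega: "\<And>i. i \<ge> 1 \<Longrightarrow>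
       L * lam q \<gamma> \<beta> a i * N (x i - xhat a x z (i - 1)) powr (real p + \<nu> - q) \<le> \<theta>2"
    and k: "k \<ge> 1"
  shows "(\<Sum>i=1..k. (L * lam q \<gamma> \<beta> a i * N (x i - xhat a x z (i - 1)) powr (real p + \<nu> - q))
              powr (varsigma \<alpha> p \<nu> q / (real p + \<nu> - q))
            * (accA a i powr (real p + \<nu> - 1) / (accA a i - accA a (i - 1)) powr (real p + \<nu>))
              powr (q / (real p + \<nu> - q)))
         \<le> q * \<theta>2 powr \<alpha> * inverse (1 - \<theta>2 powr (q / (q - 1)))
             * \<gamma> powr (- (real p + \<nu>) / (real p + \<nu> - q))
             * (L / cq \<beta> q) powr (q / (real p + \<nu> - q)) * h xs"
proof -
  define D where "D = {y. l y \<noteq> \<infinity>}"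
  define lr where "lr y = real_of_ereal (l y)" for y
  define G where "G u v = Dg 1 u [v]" for u v
  define gain where "gain i = (1 - \<theta>2 powr (q / (q - 1))) / q
    * (L powr \<alpha> / (cq \<beta> q * lam q \<gamma> \<beta> a i powr (1 - \<alpha>) * \<theta>2 powr \<alpha> * varsigma \<alpha> p \<nu> q)
      * varsigma \<alpha> p \<nu> q * N (x i - xhat a x z (i - 1)) powr varsigma \<alpha> p \<nu> q)" for i
  have l_fin: "\<And>y. l y \<noteq> -\<infinity>"
    using l_pcc unfolding proper_closed_convex_def by blast
  have lr: "convex_on D lr"
    unfolding D_def lr_def by (rule proper_closed_convex_dom[OF l_pcc])
  define F where "F i y = taylor_model Dg p (xhat a x z (i - 1)) y
      + L powr \<alpha> / (cq \<beta> q * lam q \<gamma> \<beta> a i powr (1 - \<alpha>) * \<theta>2 powr \<alpha> * varsigma \<alpha> p \<nu> q)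
        * N (y - xhat a x z (i - 1)) powr varsigma \<alpha> p \<nu> q" for i y
  have x_dom: "x i \<in> D" and z_dom: "z i \<in> D"
    and x_opt: "i \<ge> 1 \<Longrightarrow> y \<in> D \<Longrightarrow> F i (x i) + lr (x i) \<le> F i y + lr y"
    and z_opt: "y \<in> D \<Longrightarrow> estimate_fun G g lr a x i (z i) + h (z i) \<le> estimate_fun G g lr a x i y + h y"
    for i y
  proof -
    have "h x0 = 0"
      using h_zero by simp
    moreover note x_min[folded F_def] z_min[folded G_def]
    ultimately show "x i \<in> D" "z i \<in> D" "i \<ge> 1 \<Longrightarrow> y \<in> D \<Longrightarrow> F i (x i) + lr (x i) \<le> F i y + lr y"
      "y \<in> D \<Longrightarrow> estimate_fun G g lr a x i (z i) + h (z i) \<le> estimate_fun G g lr a x i y + h y"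
      using ereal_iterates_dom[where l = l and x = x and z = z and h = h and a = a and F = F
          and g = g and G = G and D = D and lr = lr] l_fin x0 x_init z_init h_nonneg a_pos D_def lr_def
      by blast+
  qed
  have step: "gain i \<le> G (x i) (u - x i) + lr u - lr (x i)
      + N (u - xhat a x z (i - 1)) powr q / (q * (a i powr q / (\<gamma> * accA a i powr (q - 1))))"
    if i: "i \<ge> 1" and u: "u \<in> D" for i u
    using regularized_step_gain[OF norm g_holder p nu(1) L pow_uc beta q alpha theta(1)
        lam_pos[OF beta gamma _ a_pos i] varsigma_def refl lr x_dom u x_opt[OF i, unfolded F_def] omega[OF i]]
      cq_mul_lam[OF beta, of q \<gamma> a i] q
    unfolding gain_def G_def by simp
  have xs: "xs \<in> D" "\<And>y. y \<in> D \<Longrightarrow> g xs + lr xs \<le> g y + lr y"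
    using ereal_argmin_dom[OF l_fin x0 xs_min] unfolding D_def lr_def by auto
  have G: "linear (G u)" and grad: "g u + G u (y - u) \<le> g y" for u y
    unfolding G_def using holder_derivs_gradient_linear[OF g_holder p]
      convex_on_has_derivative_ge[OF g_convex holder_derivs_gradient[OF g_holder p]] by auto
  have bound: "(\<Sum>i=1..k. accA a i * gain i) \<le> h xs"
    by (rule estimate_sequence_bound[where N = N and G = G and gain = gain and x = x and z = z and lr = lr])
       (use norm q gamma h_convex h_uc h_nonneg lr G grad a_pos x_dom z_dom z_opt step xs in auto)
  show ?thesis
    by (rule tensor_summands_sum_le[where d = "\<lambda>i. N (x i - xhat a x z (i - 1))"])
       (use L beta gamma theta q alpha a_pos is_norm_nonneg[OF norm] bound[unfolded gain_def] in auto)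
qed

end
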